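(* Let $n$ be a non-negative integer and let $F$ be a nonempty filter (upper order ideal) of the poset $I_{n}^{\bullet}$ of pointed integer partitions of $n$. Let $\Pi_{n}^{\bullet}(F)=\{\pi\in\Pi_{n}^{\bullet} : \mathrm{type}(\pi)\in F\}$ and $C_{n}^{\bullet}(F)=\{\vec{c}\in C_{n}^{\bullet} : \mathrm{type}(\vec{c})\in F\}$. Then $$\mu\left(\Pi_{n}^{\bullet}(F)\cup\{\hat{0}\}\right)=\sum_{\vec{c}\in C_{n}^{\bullet}(F)}(-1)^{\rho(\vec{c},\hat{1})}\cdot\mu_{C_{n}^{\bullet}(F)\cup\{\hat{0}\}}(\hat{0},\vec{c})\cdot\beta(\vec{c}).$$
   Context: A pointed integer partition of $n$ is a pair $\{\lambda,\underline{m}\}=\{\lambda_1,\dots,\lambda_k,\underline{m}\}$ where $m\ge 0$ is an integer (the pointed part) and $\lambda=\{\lambda_1,\dots,\lambda_k\}$ is an integer partition (multiset of positive integers) of $n-m$. The poset $I_n^{\bullet}$ of all pointed integer partitions of $n$ is ordered by the cover relations: replacing two non-pointed parts $\lambda_{k-1},\lambda_k$ by their sum $\lambda_{k-1}+\lambda_k$, and replacing a non-pointed part $\lambda_k$ and the pointed part $m$ by the pointed part $\lambda_k+m$ (going up in the order). A filter $F$ is a subset such that $x\le y$, $x\in F$ imply $y\in F$. A pointed set partition of $\{1,\dots,n\}$ is a pair $(\sigma,Z)$ with $Z\subseteq\{1,\dots,n\}$ (the zero block) and $\sigma$ a set partition of $\{1,\dots,n\}\setminus Z$. $\Pi_n^{\bullet}$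 is the poset of these ordered by refinement: $\pi\le\pi'$ if every block of $\pi$ is contained in some block (possibly the zero block) of $\pi'$ and the zero block of $\pi$ is contained in the zero block of $\pi'$. The type of $(\sigma,Z)$ is the pointed integer partition $\{\{|B|:B\in\sigma\},\underline{|Z|}\}$. A pointed composition of $n$ is a list $\vec{c}=(c_1,\dots,c_{k-1},\underline{c_k})$ of non-negative integers with sum $n$ where $c_1,\dots,c_{k-1}$ are positive ($c_k$ may be $0$). $C_n^{\bullet}$ is the poset of these with cover relations given by adding two adjacent entries (if the last entry is involved, the sum becomes the new last, underlined, entry); it is isomorphic to a Boolean algebra with maximum $(\underline{n})$. The type of $\vec{c}$ is the pointed integer partition $\{c_1,\dots,c_{k-1},\underline{c_k}\}$. $\beta(\vec{c})$: if $c_k>0$, it is the number of permutations in $\mathfrak{S}_n$ with descent set exactly $\{c_1,c_1+c_2,\dots,c_1+\dots+c_{k-1}\}$ (descent set of $\tau$ is $\{i:\tau(i)>\tau(i+1)\}$); if $k\ge2$ and $c_k=0$, $\beta(\vec{c})=0$; and $\beta((\underline{0}))=1$. For a poset $P$ with minimum $\hat{0}$ and maximum $\hat{1}$, $\mu(P)$ denotes $\mu_P(\hat{0},\hat{1})$. In $\Pi_n^{\bullet}(F)\cup\{\hat0\}$ and $C_n^{\bullet}(F)\cup\{\hat0\}$, $\hat{0}$ is a newly adjoined minimum, and $\hat{1}$ is the maximum of $\Pi_n^\bullet$ (all elements in the zero block), respectively $(\underline{n})$. $\rho(\vec{c},\hat{1})$ is the rank difference in $C_n^\bullet$ between $\vec{c}$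 and $(\underline{n})$, i.e. $k-1$ if $\vec{c}$ has $k$ entries. *)

theory Defs
  imports "HOL-Library.Multiset" "HOL-Library.Disjoint_Sets" "HOL-Combinatorics.Permutations"
begin

definition mobius :: "'a set \<Rightarrow> ('a \<Rightarrow> 'a \<Rightarrow> bool) \<Rightarrow> 'a \<Rightarrow> 'a \<Rightarrow> int" where
  "mobius P le = (THE f. \<forall>a b. f a b =
     (if a \<in> P \<and> b \<in> P \<and> le a b then
        (if a = b then 1 else - (\<Sum>z\<in>{z\<in>P. le a z \<and> le z b \<and> z \<noteq> b}. f a z))
      else 0))"

text \<open>Adjoining a new minimum: None is the new element, Some x the old elements.\<close>

fun lift_bot :: "('a \<Rightarrow> 'a \<Rightarrow> bool) \<Rightarrow> 'a option \<Rightarrow> 'a option \<Rightarrow> bool" where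
  "lift_bot le None _ = True"
| "lift_bot le (Some x) None = False"
| "lift_bot le (Some x) (Some y) = le x y"

definition with_bot :: "'a set \<Rightarrow> 'a option set" where
  "with_bot P = insert None (Some ` P)"

text \<open>A pointed integer partition is (lambda, m): lambda a multiset of positive integers,
  m the pointed part.\<close>

type_synonym pip = "nat multiset \<times> nat"

definition IP :: "nat \<Rightarrow> pip set" where
  "IP n = {(l, m). (\<forall>x\<in>#l. 0 < x) \<and> sum_mset l + m = n}"

inductive ip_cover :: "pip \<Rightarrow> pip \<Rightarrow> bool" where
  merge: "ip_cover (l + {#a, b#}, m) (l + {#a + b#}, m)"
| point: "ip_cover (l + {#a#}, m) (l, a + m)"

definition ip_le :: "pip \<Rightarrow> pip \<Rightarrow> bool" where
  "ip_le = ip_cover\<^sup>*\<^sup>*"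

definition is_filter_IP :: "nat \<Rightarrow> pip set \<Rightarrow> bool" where
  "is_filter_IP n F \<longleftrightarrow> F \<subseteq> IP n \<and> (\<forall>x\<in>F. \<forall>y\<in>IP n. ip_le x y \<longrightarrow> y \<in> F)"

type_synonym psp = "nat set set \<times> nat set"

definition PiP :: "nat \<Rightarrow> psp set" where
  "PiP n = {(s, Z). Z \<subseteq> {1..n} \<and> partition_on ({1..n} - Z) s}"

definition psp_le :: "psp \<Rightarrow> psp \<Rightarrow> bool" where
  "psp_le p q \<longleftrightarrow> (\<forall>B\<in>fst p. (\<exists>B'\<in>fst q. B \<subseteq> B') \<or> B \<subseteq> snd q) \<and> snd p \<subseteq> snd q"

definition psp_type :: "psp \<Rightarrow> pip" where
  "psp_type p = (image_mset card (mset_set (fst p)), card (snd p))"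

definition PiP_top :: "nat \<Rightarrow> psp" where
  "PiP_top n = ({}, {1..n})"

definition CP :: "nat \<Rightarrow> nat list set" where
  "CP n = {c. c \<noteq> [] \<and> sum_list c = n \<and> (\<forall>x\<in>set (butlast c). 0 < x)}"

inductive comp_cover :: "nat list \<Rightarrow> nat list \<Rightarrow> bool" where
  "comp_cover (xs @ a # b # ys) (xs @ (a + b) # ys)"

definition comp_le :: "nat list \<Rightarrow> nat list \<Rightarrow> bool" where
  "comp_le = comp_cover\<^sup>*\<^sup>*"

definition comp_type :: "nat list \<Rightarrow> pip" where
  "comp_type c = (mset (butlast c), last c)"

definition descents :: "(nat \<Rightarrow> nat) \<Rightarrow> nat \<Rightarrow> nat set" where
  "descents t n = {i \<in> {1..<n}. t i > t (Suc i)}"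

definition comp_descent_set :: "nat list \<Rightarrow> nat set" where
  "comp_descent_set c = {sum_list (take j c) | j. 1 \<le> j \<and> j < length c}"

definition beta :: "nat list \<Rightarrow> int" where
  "beta c = (if last c > 0 then
       int (card {t. t permutes {1..sum_list c} \<and> descents t (sum_list c) = comp_descent_set c})
     else if length c \<ge> 2 then 0 else 1)"

end

theory Submission
  imports Defs
begin

text \<open>
  Both sides are evaluated by one principle: if a weight on a finite poset is an upper sum
  \<open>w z = (\<Sum>x \<ge> z. u x)\<close>, then for an upper set \<open>P\<close> with a new minimum \<open>0\<close> adjoined,
  \<open>(\<Sum>z\<in>P. \<mu>(0, z) * w z) = - (\<Sum>x\<in>P. u x)\<close>.

  On pointed set partitions let \<open>u \<sigma>\<close> be the signed number \<open>(-1)^k k!\<close> of orderings of the \<open>k\<close>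
  non-zero blocks of \<open>\<sigma>\<close>.  Its upper sum at \<open>\<pi>\<close> is the signed number of ordered block lists above
  \<open>\<pi>\<close>; splitting a fixed block of \<open>\<pi>\<close> off its block in the list, or merging it back, is a
  sign-reversing involution, so the upper sums vanish except at the maximum, where they are \<open>1\<close>.
  Hence the left-hand side is minus the signed number of ordered block lists whose type lies in
  \<open>F\<close>.  Grouped by their sizes, which form a pointed composition \<open>c\<close>, these lists are counted by
  the permutations whose descent set is contained in that of \<open>c\<close>.  The compositions above \<open>c\<close>
  form the Boolean lattice of subsets of its descent set, so by inclusion-exclusion
  \<open>(-1)^(k-1) \<beta>(c)\<close> is the upper sum of these signed counts, and the same principle gives the
  right-hand side.
\<close>

section \<open>Moebius functions of finite posets\<close>

definition porder_on :: "'a set \<Rightarrow> ('a \<Rightarrow> 'a \<Rightarrow> bool) \<Rightarrow> bool" where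
  "porder_on A le \<longleftrightarrow> (\<forall>x\<in>A. le x x) \<and> (\<forall>x\<in>A. \<forall>y\<in>A. le x y \<longrightarrow> le y x \<longrightarrow> x = y)
     \<and> (\<forall>x\<in>A. \<forall>y\<in>A. \<forall>z\<in>A. le x y \<longrightarrow> le y z \<longrightarrow> le x z)"

lemma porder_on_subset: "porder_on Q le \<Longrightarrow> P \<subseteq> Q \<Longrightarrow> porder_on P le"
  unfolding porder_on_def by blast

lemma card_below_less:
  assumes "finite A" "porder_on A le" "z \<in> A" "b \<in> A" "le z b" "z \<noteq> b"
  shows "card {y\<in>A. le y z} < card {y\<in>A. le y b}"
proof (rule psubset_card_mono)
  show "finite {y\<in>A. le y b}" using assms by auto
  have "{y\<in>A. le y z} \<subseteq> {y\<in>A. le y b}" using assms unfolding porder_on_def by blast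
  moreover have "b \<in> {y\<in>A. le y b}" "b \<notin> {y\<in>A. le y z}" using assms unfolding porder_on_def by blast+
  ultimately show "{y\<in>A. le y z} \<subset> {y\<in>A. le y b}" by blast
qed

text \<open>The cardinality guard always holds on partial orders (\<open>card_below_less\<close>); it only makes
  the recursion terminate on arbitrary relations.\<close>

function mobius_fun :: "'a set \<Rightarrow> ('a \<Rightarrow> 'a \<Rightarrow> bool) \<Rightarrow> 'a \<Rightarrow> 'a \<Rightarrow> int" where
  "mobius_fun A le a b = (if a \<in> A \<and> b \<in> A \<and> le a b then
      (if a = b then 1 else - (\<Sum>z\<in>{z\<in>A. le a z \<and> le z b \<and> z \<noteq> b
           \<and> card {y\<in>A. le y z} < card {y\<in>A. le y b}}. mobius_fun A le a z))
      else 0)"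
  by auto
termination
  by (relation "measure (\<lambda>(A,le,a,b). card {y\<in>A. le y b})") auto

declare mobius_fun.simps[simp del]

definition mobius_equations :: "'a set \<Rightarrow> ('a \<Rightarrow> 'a \<Rightarrow> bool) \<Rightarrow> ('a \<Rightarrow> 'a \<Rightarrow> int) \<Rightarrow> bool" where
  "mobius_equations A le f \<longleftrightarrow> (\<forall>a b. f a b =
     (if a \<in> A \<and> b \<in> A \<and> le a b then
        (if a = b then 1 else - (\<Sum>z\<in>{z\<in>A. le a z \<and> le z b \<and> z \<noteq> b}. f a z))
      else 0))"

lemma mobius_equations_mobius_fun:
  assumes "finite A" "porder_on A le"
  shows "mobius_equations A le (mobius_fun A le)"
  unfolding mobius_equations_def
proof (intro allI)
  fix a b
  have "{z\<in>A. le a z \<and> le z b \<and> z \<noteq> b \<and> card {y\<in>A. le y z} < card {y\<in>A. le y b}}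
      = {z\<in>A. le a z \<and> le z b \<and> z \<noteq> b}" if "b \<in> A"
    using card_below_less[OF assms _ that] by blast
  then show "mobius_fun A le a b = (if a \<in> A \<and> b \<in> A \<and> le a b then
        (if a = b then 1 else - (\<Sum>z\<in>{z\<in>A. le a z \<and> le z b \<and> z \<noteq> b}. mobius_fun A le a z))
      else 0)"
    by (subst mobius_fun.simps) auto
qed

lemma mobius_equations_unique:
  assumes "finite A" "porder_on A le" "mobius_equations A le f" "mobius_equations A le g"
  shows "f a b = g a b"
proof (induction "card {y\<in>A. le y b}" arbitrary: b rule: less_induct)
  case less
  note f = assms(3)[unfolded mobius_equations_def, rule_format, of a b]
  note g = assms(4)[unfolded mobius_equations_def, rule_format, of a b]
  show ?case
  proof (cases "a \<in> A \<and> b \<in> A \<and> le a b \<and> a \<noteq> b")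
    case True
    have "(\<Sum>z\<in>{z\<in>A. le a z \<and> le z b \<and> z \<noteq> b}. f a z) = (\<Sum>z\<in>{z\<in>A. le a z \<and> le z b \<and> z \<noteq> b}. g a z)"
      using less card_below_less[OF assms(1,2)] True by (intro sum.cong) auto
    then show ?thesis using f g True by simp
  next
    case False
    then show ?thesis using f g by auto
  qed
qed

lemma mobius_unfold:
  assumes "finite A" "porder_on A le"
  shows "mobius A le a b = (if a \<in> A \<and> b \<in> A \<and> le a b then
        (if a = b then 1 else - (\<Sum>z\<in>{z\<in>A. le a z \<and> le z b \<and> z \<noteq> b}. mobius A le a z))
      else 0)"
proof -
  have "mobius A le = (THE f. mobius_equations A le f)"
    unfolding mobius_def mobius_equations_def by (rule refl)
  also have "\<dots> = mobius_fun A le"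
  proof (rule the_equality)
    show "mobius_equations A le (mobius_fun A le)" by (rule mobius_equations_mobius_fun[OF assms])
    show "f = mobius_fun A le" if "mobius_equations A le f" for f
      by (intro ext) (rule mobius_equations_unique[OF assms that mobius_equations_mobius_fun[OF assms]])
  qed
  finally show ?thesis
    using mobius_equations_mobius_fun[OF assms] unfolding mobius_equations_def by simp
qed

lemma porder_on_with_bot:
  assumes "porder_on P le" shows "porder_on (with_bot P) (lift_bot le)"
proof -
  have r: "\<And>x. x \<in> P \<Longrightarrow> le x x" and a: "\<And>x y. x \<in> P \<Longrightarrow> y \<in> P \<Longrightarrow> le x y \<Longrightarrow> le y x \<Longrightarrow> x = y"
    and t: "\<And>x y z. x \<in> P \<Longrightarrow> y \<in> P \<Longrightarrow> z \<in> P \<Longrightarrow> le x y \<Longrightarrow> le y z \<Longrightarrow> le x z"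
    using assms unfolding porder_on_def by blast+
  show ?thesis unfolding porder_on_def with_bot_def
  proof (intro conjI ballI impI)
    fix x assume "x \<in> insert None (Some ` P)" then show "lift_bot le x x" using r by (cases x) auto
  next
    fix x y assume "x \<in> insert None (Some ` P)" "y \<in> insert None (Some ` P)" "lift_bot le x y" "lift_bot le y x"
    then show "x = y" by (cases x; cases y) (auto intro: a)
  next
    fix x y z assume "x \<in> insert None (Some ` P)" "y \<in> insert None (Some ` P)" "z \<in> insert None (Some ` P)" "lift_bot le x y" "lift_bot le y z"
    then show "lift_bot le x z" by (cases x; cases y; cases z) (auto intro: t)
  qed
qed

lemma sum_mobius_bot_below:
  assumes "finite P" "porder_on P le" "y \<in> P"
  shows "(\<Sum>x\<in>{x\<in>P. le x y}. mobius (with_bot P) (lift_bot le) None (Some x)) = -1"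
proof -
  let ?m = "mobius (with_bot P) (lift_bot le)"
  have fin: "finite (with_bot P)" using assms(1) by (simp add: with_bot_def)
  note unfold = mobius_unfold[OF fin porder_on_with_bot[OF assms(2)]]
  have ry: "le y y" using assms unfolding porder_on_def by auto
  have "{z\<in>with_bot P. lift_bot le None z \<and> lift_bot le z (Some y) \<and> z \<noteq> Some y}
      = insert None (Some ` {x\<in>P. le x y \<and> x \<noteq> y})" (is "?L = ?R")
  proof (rule set_eqI)
    fix z show "z \<in> ?L \<longleftrightarrow> z \<in> ?R" unfolding with_bot_def by (cases z) auto
  qed
  then have "?m None (Some y) = - (\<Sum>z\<in>insert None (Some ` {x\<in>P. le x y \<and> x \<noteq> y}). ?m None z)"
    using unfold[of None "Some y"] assms ry by (simp add: with_bot_def)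
  also have "\<dots> = - (1 + (\<Sum>x\<in>{x\<in>P. le x y \<and> x \<noteq> y}. ?m None (Some x)))"
    using assms(1) unfold[of None None] by (simp add: sum.reindex with_bot_def)
  finally have *: "?m None (Some y) + (\<Sum>x\<in>{x\<in>P. le x y \<and> x \<noteq> y}. ?m None (Some x)) = -1" by simp
  have "{x\<in>P. le x y} = insert y {x\<in>P. le x y \<and> x \<noteq> y}" using assms ry by auto
  then show ?thesis using * assms(1) by simp
qed

lemma sum_mobius_bot_times_upper_sum:
  fixes u w :: "'a \<Rightarrow> int"
  assumes finQ: "finite Q" and PQ: "P \<subseteq> Q" and po: "porder_on P le"
    and up: "\<And>x y. x \<in> P \<Longrightarrow> y \<in> Q \<Longrightarrow> le x y \<Longrightarrow> y \<in> P"
    and w: "\<And>z. z \<in> P \<Longrightarrow> w z = (\<Sum>x\<in>{x\<in>Q. le z x}. u x)"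
  shows "(\<Sum>z\<in>P. mobius (with_bot P) (lift_bot le) None (Some z) * w z) = - (\<Sum>x\<in>P. u x)"
proof -
  let ?g = "\<lambda>z. mobius (with_bot P) (lift_bot le) None (Some z)"
  have finP: "finite P" using finQ PQ finite_subset by auto
  have below: "(\<Sum>z\<in>{z\<in>P. le z x}. ?g z) = (if x \<in> P then -1 else 0)" if "x \<in> Q" for x
  proof (cases "x \<in> P")
    case False
    then have "{z\<in>P. le z x} = {}" using up that by blast
    then show ?thesis using False by (simp only: sum.empty if_False)
  qed (simp add: sum_mobius_bot_below[OF finP po])
  have "(\<Sum>z\<in>P. ?g z * w z) = (\<Sum>z\<in>P. \<Sum>x\<in>Q. if le z x then ?g z * u x else 0)"
    using w finQ by (intro sum.cong) (simp_all add: sum_distrib_left sum.inter_filter[symmetric])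
  also have "\<dots> = (\<Sum>x\<in>Q. \<Sum>z\<in>P. if le z x then ?g z * u x else 0)"
    by (rule sum.swap)
  also have "\<dots> = (\<Sum>x\<in>Q. (\<Sum>z\<in>{z\<in>P. le z x}. ?g z) * u x)"
    using finP by (simp add: sum_distrib_right sum.inter_filter[symmetric])
  also have "\<dots> = (\<Sum>x\<in>Q. if x \<in> P then - u x else 0)"
    using below by (intro sum.cong) auto
  also have "\<dots> = - (\<Sum>x\<in>P. u x)"
    using finQ PQ by (simp add: sum.If_cases sum_negf Int_absorb1)
  finally show ?thesis .
qed

lemma mobius_bot_top_eq_neg_sum:
  fixes u :: "'a \<Rightarrow> int" and t :: 'a
  assumes "finite Q" "P \<subseteq> Q" "porder_on P le" "t \<in> P"
    and "\<And>x y. x \<in> P \<Longrightarrow> y \<in> Q \<Longrightarrow> le x y \<Longrightarrow> y \<in> P"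
    and "\<And>z. z \<in> P \<Longrightarrow> (\<Sum>x\<in>{x\<in>Q. le z x}. u x) = (if z = t then 1 else 0)"
  shows "mobius (with_bot P) (lift_bot le) None (Some t) = - (\<Sum>x\<in>P. u x)"
proof -
  have "finite P" using assms(1,2) finite_subset by auto
  then have "mobius (with_bot P) (lift_bot le) None (Some t)
      = (\<Sum>z\<in>P. mobius (with_bot P) (lift_bot le) None (Some z) * (if z = t then 1 else 0))"
    using assms(4) by (simp add: sum.delta' if_distrib[of "\<lambda>x. _ * x"] cong: if_cong)
  also have "\<dots> = - (\<Sum>x\<in>P. u x)"
    using sum_mobius_bot_times_upper_sum[OF assms(1-3,5), where w = "\<lambda>z. if z = t then 1 else 0" and u = u] assms(6)
    by simp
  finally show ?thesis .
qed

lemma ip_le_trans: "ip_le x y \<Longrightarrow> ip_le y z \<Longrightarrow> ip_le x z"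
  unfolding ip_le_def by simp

lemma ip_le_merge_all: "K \<noteq> {#} \<Longrightarrow> ip_le (L + K, m) (L + {#sum_mset K#}, m)"
proof (induction K arbitrary: L rule: multiset_induct)
  case empty then show ?case by simp
next
  case (add b K)
  show ?case
  proof (cases "K = {#}")
    case True then show ?thesis by (simp add: ip_le_def)
  next
    case False
    have "ip_le ((L + {#b#}) + K, m) ((L + {#b#}) + {#sum_mset K#}, m)" using add.IH[OF False] .
    moreover have "ip_cover (L + {#sum_mset K, b#}, m) (L + {#sum_mset K + b#}, m)"
      by (rule ip_cover.merge)
    ultimately show ?thesis unfolding ip_le_def
      by (simp add: ac_simps rtranclp.rtrancl_into_rtrancl)
  qed
qed

lemma ip_le_point_all: "ip_le (L + K, m) (L, sum_mset K + m)"
proof (induction K arbitrary: m rule: multiset_induct)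
  case empty then show ?case by (simp add: ip_le_def)
next
  case (add b K)
  have "ip_cover (L + K + {#b#}, m) (L + K, b + m)" by (rule ip_cover.point)
  then have "ip_le (L + add_mset b K, m) (L + K, b + m)" by (simp add: ip_le_def)
  moreover have "ip_le (L + K, b + m) (L, sum_mset K + (b + m))" by (rule add.IH)
  ultimately show ?case using ip_le_trans by (simp add: ac_simps)
qed

lemma ip_le_merge_groups:
  assumes "finite I" "\<forall>i\<in>I. K i \<noteq> {#}"
  shows "ip_le (L + (\<Sum>i\<in>I. K i), m) (L + (\<Sum>i\<in>I. {#sum_mset (K i)#}), m)"
  using assms
proof (induction I arbitrary: L rule: finite_induct)
  case empty then show ?case by (simp add: ip_le_def)
next
  case (insert i I)
  have "ip_le ((L + K i) + (\<Sum>i\<in>I. K i), m) ((L + K i) + (\<Sum>i\<in>I. {#sum_mset (K i)#}), m)"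
    using insert by simp
  moreover have "ip_le ((L + (\<Sum>i\<in>I. {#sum_mset (K i)#})) + K i, m)
       ((L + (\<Sum>i\<in>I. {#sum_mset (K i)#})) + {#sum_mset (K i)#}, m)"
    using insert by (intro ip_le_merge_all) simp
  ultimately show ?case using insert by (simp add: ac_simps ip_le_trans)
qed

lemma ip_le_coarsen:
  assumes "finite I" "\<forall>i\<in>I. K i \<noteq> {#}"
  shows "ip_le (K0 + (\<Sum>i\<in>I. K i), m) ((\<Sum>i\<in>I. {#sum_mset (K i)#}), sum_mset K0 + m)"
proof -
  have "ip_le (K0 + (\<Sum>i\<in>I. K i), m) (K0 + (\<Sum>i\<in>I. {#sum_mset (K i)#}), m)"
    by (rule ip_le_merge_groups[OF assms])
  moreover have "ip_le ((\<Sum>i\<in>I. {#sum_mset (K i)#}) + K0, m) ((\<Sum>i\<in>I. {#sum_mset (K i)#}), sum_mset K0 + m)"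
    by (rule ip_le_point_all)
  ultimately show ?thesis by (simp add: ac_simps ip_le_trans)
qed

lemma is_filter_IP_top:
  assumes "is_filter_IP n F" "F \<noteq> {}"
  shows "({#}, n) \<in> F"
proof -
  obtain l m where lm: "(l, m) \<in> F" using assms(2) by auto
  then have "sum_mset l + m = n" using assms(1) unfolding is_filter_IP_def IP_def by auto
  moreover have "ip_le ({#} + l, m) ({#}, sum_mset l + m)" by (rule ip_le_point_all)
  moreover have "({#}, n) \<in> IP n" unfolding IP_def by simp
  ultimately show ?thesis using assms(1) lm unfolding is_filter_IP_def by auto
qed

lemma PiP_D:
  assumes "(s, Z) \<in> PiP n"
  shows "Z \<subseteq> {1..n}" "\<Union>s = {1..n} - Z" "disjoint s" "finite s"
    "\<And>b. b \<in> s \<Longrightarrow> b \<noteq> {} \<and> b \<subseteq> {1..n} \<and> b \<inter> Z = {} \<and> finite b"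
proof -
  have p: "partition_on ({1..n} - Z) s" and z: "Z \<subseteq> {1..n}" using assms unfolding PiP_def by auto
  show "Z \<subseteq> {1..n}" "\<Union>s = {1..n} - Z" "disjoint s"
    using p z unfolding partition_on_def by auto
  show "finite s" using p by (rule finite_elements[rotated]) simp
  fix b assume "b \<in> s"
  then show "b \<noteq> {} \<and> b \<subseteq> {1..n} \<and> b \<inter> Z = {} \<and> finite b"
    using p unfolding partition_on_def by (auto intro: finite_subset)
qed

lemma finite_PiP: "finite (PiP n)"
proof (rule finite_subset)
  show "PiP n \<subseteq> Pow (Pow {1..n}) \<times> Pow {1..n}"
    unfolding PiP_def partition_on_def by auto
qed simp

lemma PiP_top_in_PiP: "PiP_top n \<in> PiP n"
  unfolding PiP_top_def PiP_def by (simp add: partition_on_empty)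

lemma psp_type_PiP_top: "psp_type (PiP_top n) = ({#}, n)"
  unfolding psp_type_def PiP_top_def by simp

lemma psp_le_trans: "psp_le x y \<Longrightarrow> psp_le y z \<Longrightarrow> psp_le x z"
  unfolding psp_le_def by (meson order_trans subset_trans)

lemma psp_le_same_zero_block_subset:
  assumes t: "(t, W) \<in> PiP n" and t': "(t', W) \<in> PiP n"
    and le: "psp_le (t, W) (t', W)" and le': "psp_le (t', W) (t, W)"
  shows "t \<subseteq> t'"
proof
  fix B assume B: "B \<in> t"
  have Bp: "B \<noteq> {}" "B \<inter> W = {}" using PiP_D(5)[OF t B] by auto
  have "(\<exists>B'\<in>t'. B \<subseteq> B') \<or> B \<subseteq> W" using le B unfolding psp_le_def by auto
  then obtain B' where B': "B' \<in> t'" "B \<subseteq> B'" using Bp by blast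
  have B'p: "B' \<noteq> {}" "B' \<inter> W = {}" using PiP_D(5)[OF t' B'(1)] by auto
  have "(\<exists>B''\<in>t. B' \<subseteq> B'') \<or> B' \<subseteq> W" using le' B'(1) unfolding psp_le_def by auto
  then obtain B'' where B'': "B'' \<in> t" "B' \<subseteq> B''" using B'p by blast
  have "B = B''"
    using disjointD[OF PiP_D(3)[OF t] B B''(1)] B' B'' Bp by blast
  then show "B \<in> t'" using B' B'' by auto
qed

lemma porder_PiP: "porder_on (PiP n) psp_le"
  unfolding porder_on_def
proof (intro conjI ballI impI)
  fix x assume "x \<in> PiP n" then show "psp_le x x" unfolding psp_le_def by auto
next
  fix x y z assume "psp_le x y" "psp_le y z" then show "psp_le x z" by (rule psp_le_trans)
next
  fix x y assume x: "x \<in> PiP n" and y: "y \<in> PiP n" and xy: "psp_le x y" and yx: "psp_le y x"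
  obtain s Z s' Z' where sZ: "x = (s, Z)" "y = (s', Z')" by (cases x, cases y)
  have "Z = Z'" using xy yx sZ unfolding psp_le_def by auto
  then show "x = y"
    using psp_le_same_zero_block_subset[of s Z n s'] psp_le_same_zero_block_subset[of s' Z n s]
      x y xy yx sZ by auto
qed

lemma image_mset_mset_set_eq_sum: "finite A \<Longrightarrow> image_mset f (mset_set A) = (\<Sum>x\<in>A. {#f x#})"
  by (induction A rule: finite_induct) auto

lemma sum_mset_sum_singletons: "sum_mset (\<Sum>x\<in>A. {#f x#}) = sum f A"
  by (induction A rule: infinite_finite_induct) auto

lemma psp_type_IP:
  assumes "(s, Z) \<in> PiP n"
  shows "psp_type (s, Z) \<in> IP n"
proof -
  note p = PiP_D[OF assms]
  have "\<forall>x\<in>#image_mset card (mset_set s). 0 < x"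
    using p(4,5) by (auto simp: card_gt_0_iff)
  moreover have "card (\<Union>s) = sum card s" using p by (intro card_Union_disjoint) auto
  then have "sum_mset (image_mset card (mset_set s)) = card (\<Union>s)"
    by (simp add: sum_unfold_sum_mset[symmetric])
  moreover have "card (\<Union>s) + card Z = n"
    using p(1,2) by (simp add: card_Diff_subset finite_subset card_mono[of "{1..n}" Z, simplified])
  ultimately show ?thesis unfolding IP_def psp_type_def by auto
qed

lemma psp_le_block_groups:
  assumes x: "(s, Z) \<in> PiP n" and y: "(s', Z') \<in> PiP n" and le: "psp_le (s, Z) (s', Z')"
  defines "G B \<equiv> {b\<in>s. b \<subseteq> B}"
  shows "s = (\<Union>B\<in>s'. G B) \<union> G Z'"
    and "\<And>B. B \<in> s' \<Longrightarrow> \<Union>(G B) = B"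
    and "Z' = Z \<union> \<Union>(G Z')"
    and "\<And>B C. B \<in> s' \<Longrightarrow> C \<in> insert Z' s' \<Longrightarrow> B \<noteq> C \<Longrightarrow> G B \<inter> G C = {}"
proof -
  note px = PiP_D[OF x] and py = PiP_D[OF y]
  have cov: "\<And>b. b \<in> s \<Longrightarrow> (\<exists>B\<in>s'. b \<subseteq> B) \<or> b \<subseteq> Z'" and ZZ: "Z \<subseteq> Z'"
    using le unfolding psp_le_def by auto
  show "s = (\<Union>B\<in>s'. G B) \<union> G Z'" using cov unfolding G_def by blast
  show disj: "G B \<inter> G C = {}" if "B \<in> s'" "C \<in> insert Z' s'" "B \<noteq> C" for B C
  proof -
    have "B \<inter> C = {}"
      using that disjointD[OF py(3), of B C] py(5)[of B] by auto
    then show ?thesis unfolding G_def using px(5) by blast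
  qed
  show "\<Union>(G B) = B" if B: "B \<in> s'" for B
  proof
    show "\<Union>(G B) \<subseteq> B" unfolding G_def by blast
    show "B \<subseteq> \<Union>(G B)"
    proof
      fix y assume yB: "y \<in> B"
      then obtain b where b: "b \<in> s" "y \<in> b" using py(5)[OF B] px(2) ZZ by blast
      from cov[OF b(1)] have "b \<subseteq> B"
      proof
        assume "\<exists>B''\<in>s'. b \<subseteq> B''"
        then obtain B'' where B'': "B'' \<in> s'" "b \<subseteq> B''" by blast
        then have "B'' = B" using yB b disjointD[OF py(3) B''(1) B] by blast
        then show ?thesis using B'' by simp
      next
        assume "b \<subseteq> Z'" then show ?thesis using yB b py(5)[OF B] by blast
      qed
      then show "y \<in> \<Union>(G B)" using b unfolding G_def by blast
    qed
  qed
  show "Z' = Z \<union> \<Union>(G Z')"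
  proof
    show "Z \<union> \<Union>(G Z') \<subseteq> Z'" using ZZ unfolding G_def by blast
    show "Z' \<subseteq> Z \<union> \<Union>(G Z')"
    proof
      fix y assume yZ: "y \<in> Z'"
      show "y \<in> Z \<union> \<Union>(G Z')"
      proof (cases "y \<in> Z")
        case False
        then obtain b where b: "b \<in> s" "y \<in> b" using yZ py(1) px(2) by blast
        have "b \<subseteq> Z'" using cov[OF b(1)] yZ b py(5) by blast
        then show ?thesis using b unfolding G_def by blast
      qed simp
    qed
  qed
qed

lemma psp_type_mono:
  assumes x: "(s, Z) \<in> PiP n" and y: "(s', Z') \<in> PiP n" and le: "psp_le (s, Z) (s', Z')"
  shows "ip_le (psp_type (s, Z)) (psp_type (s', Z'))"
proof -
  note px = PiP_D[OF x] and py = PiP_D[OF y]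
  define G where "G B = {b\<in>s. b \<subseteq> B}" for B
  define K where "K B = (\<Sum>b\<in>G B. {#card b#})" for B
  note groups = psp_le_block_groups[OF x y le, folded G_def]
  have finG: "finite (G B)" for B using px(4) unfolding G_def by simp
  have sum_K: "sum_mset (K B) = card (\<Union>(G B))" for B
    unfolding K_def sum_mset_sum_singletons using px(3,5)
    by (intro card_Union_disjoint[symmetric]) (auto simp: G_def pairwise_def disjnt_def disjoint_def)
  have s'_Z': "B \<noteq> Z'" if "B \<in> s'" for B using py(5)[OF that] by auto
  have "image_mset card (mset_set s) = (\<Sum>b\<in>(\<Union>B\<in>s'. G B). {#card b#}) + K Z'"
    unfolding image_mset_mset_set_eq_sum[OF px(4)] K_def using groups(4)[of _ Z'] s'_Z' finG py(4)
    by (subst groups(1), intro sum.union_disjoint) auto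
  also have "(\<Sum>b\<in>(\<Union>B\<in>s'. G B). {#card b#}) = (\<Sum>B\<in>s'. K B)"
    unfolding K_def using py(4) finG groups(4) by (intro sum.UNION_disjoint) auto
  finally have type_s: "image_mset card (mset_set s) = K Z' + (\<Sum>B\<in>s'. K B)" by (simp add: ac_simps)
  have type_s': "image_mset card (mset_set s') = (\<Sum>B\<in>s'. {#sum_mset (K B)#})"
    unfolding image_mset_mset_set_eq_sum[OF py(4)] using groups(2) sum_K by (intro sum.cong) auto
  have fin: "finite Z" "finite (\<Union>(G Z'))"
    using finG px(1,5) finite_subset[OF px(1)] unfolding G_def by auto
  have disj: "Z \<inter> \<Union>(G Z') = {}" using px(5) unfolding G_def by blast
  have "card Z' = card (Z \<union> \<Union>(G Z'))" by (rule arg_cong[OF groups(3)])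
  also have "\<dots> = card Z + sum_mset (K Z')"
    unfolding sum_K by (rule card_Un_disjoint[OF fin disj])
  finally have card_Z': "card Z' = sum_mset (K Z') + card Z" by simp
  have "\<forall>B\<in>s'. K B \<noteq> {#}"
  proof
    fix B assume "B \<in> s'"
    then have "G B \<noteq> {}" using groups(2) py(5) by fastforce
    then show "K B \<noteq> {#}"
      unfolding K_def image_mset_mset_set_eq_sum[OF finG, symmetric] by (simp add: mset_set_empty_iff finG)
  qed
  from ip_le_coarsen[OF py(4) this, of "K Z'" "card Z"] show ?thesis
    unfolding psp_type_def fst_conv snd_conv type_s type_s' card_Z' .
qed

section \<open>Ordered block lists\<close>

fun disjoint_blocks :: "nat set list \<Rightarrow> bool" where
  "disjoint_blocks [] = True"
| "disjoint_blocks (B # bs) = (B \<noteq> {} \<and> B \<inter> \<Union>(set bs) = {} \<and> disjoint_blocks bs)"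

lemma disjoint_blocks_append: "disjoint_blocks (xs @ ys) \<longleftrightarrow> disjoint_blocks xs \<and> disjoint_blocks ys \<and> \<Union>(set xs) \<inter> \<Union>(set ys) = {}"
  by (induction xs) auto

lemma disjoint_blocks_distinct: "disjoint_blocks bs \<Longrightarrow> distinct bs"
  by (induction bs) auto

lemma disjoint_blockdisjoint_b0: "disjoint_blocks bs \<Longrightarrow> B \<in> set bs \<Longrightarrow> C \<in> set bs \<Longrightarrow> B \<noteq> C \<Longrightarrow> B \<inter> C = {}"
  by (induction bs) auto

lemma disjoint_blocks_nonempty: "disjoint_blocks bs \<Longrightarrow> B \<in> set bs \<Longrightarrow> B \<noteq> {}"
  by (induction bs) auto

definition block_lists :: "nat \<Rightarrow> nat set list set" where
  "block_lists n = {bs. disjoint_blocks bs \<and> \<Union>(set bs) \<subseteq> {1..n}}"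

definition psp_of_blocks :: "nat \<Rightarrow> nat set list \<Rightarrow> psp" where
  "psp_of_blocks n bs = (set bs, {1..n} - \<Union>(set bs))"

lemma finite_block_lists: "finite (block_lists n)"
proof (rule finite_subset)
  show "block_lists n \<subseteq> {xs. set xs \<subseteq> Pow {1..n} \<and> distinct xs}"
    unfolding block_lists_def using disjoint_blocks_distinct by auto
  show "finite {xs. set xs \<subseteq> Pow {1..n} \<and> distinct xs}"
    by (rule finite_subset_distinct) simp
qed

lemma psp_of_blocks_PiP: assumes "bs \<in> block_lists n" shows "psp_of_blocks n bs \<in> PiP n"
proof -
  have o: "disjoint_blocks bs" and u: "\<Union>(set bs) \<subseteq> {1..n}" using assms unfolding block_lists_def by auto
  have "partition_on (\<Union>(set bs)) (set bs)"
  proof (rule partition_onI)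
    fix p q assume "p \<in> set bs" "q \<in> set bs" "p \<noteq> q"
    then show "disjnt p q" using disjoint_blockdisjoint_b0[OF o] by (simp add: disjnt_def)
  qed (use disjoint_blocks_nonempty[OF o] in auto)
  moreover have "{1..n} - ({1..n} - \<Union>(set bs)) = \<Union>(set bs)" using u by auto
  ultimately show ?thesis unfolding psp_of_blocks_def PiP_def by auto
qed

text \<open>On the block lists above a pointed partition with a block \<open>b0\<close>, \<open>toggle b0\<close> splits \<open>b0\<close>
  off the first block meeting it, or merges it into the next block (appending or dropping it at the
  end of the list): a sign-reversing involution, since the length changes by one.\<close>

definition toggle :: "nat set \<Rightarrow> nat set list \<Rightarrow> nat set list" where
  "toggle b0 bs = (let xs = takeWhile (\<lambda>B. b0 \<inter> B = {}) bs in
     case dropWhile (\<lambda>B. b0 \<inter> B = {}) bs of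
       [] \<Rightarrow> bs @ [b0]
     | B # r \<Rightarrow> if B = b0 then (case r of [] \<Rightarrow> xs | C # ys \<Rightarrow> xs @ (b0 \<union> C) # ys)
               else xs @ b0 # (B - b0) # r)"

lemma takeWhile_dropWhile_disjoint:
  assumes "\<forall>B\<in>set xs. b0 \<inter> B = {}" "b0 \<inter> B \<noteq> {}"
  shows "takeWhile (\<lambda>B. b0 \<inter> B = {}) (xs @ B # ys) = xs"
    "dropWhile (\<lambda>B. b0 \<inter> B = {}) (xs @ B # ys) = B # ys"
  using assms by (induction xs) auto

lemma toggle_disjoint: "\<forall>B\<in>set bs. b0 \<inter> B = {} \<Longrightarrow> toggle b0 bs = bs @ [b0]"
  unfolding toggle_def by (simp add: Let_def dropWhile_eq_Nil_conv[THEN iffD2])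

lemma toggle_last: "\<forall>B\<in>set xs. b0 \<inter> B = {} \<Longrightarrow> b0 \<noteq> {} \<Longrightarrow> toggle b0 (xs @ [b0]) = xs"
  unfolding toggle_def using takeWhile_dropWhile_disjoint[of xs b0 b0 "[]"] by (simp add: Let_def)

lemma toggle_merge: "\<forall>B\<in>set xs. b0 \<inter> B = {} \<Longrightarrow> b0 \<noteq> {} \<Longrightarrow> toggle b0 (xs @ b0 # C # ys) = xs @ (b0 \<union> C) # ys"
  unfolding toggle_def using takeWhile_dropWhile_disjoint[of xs b0 b0 "C # ys"] by (simp add: Let_def)

lemma toggle_split: "\<forall>B\<in>set xs. b0 \<inter> B = {} \<Longrightarrow> b0 \<inter> B \<noteq> {} \<Longrightarrow> B \<noteq> b0
   \<Longrightarrow> toggle b0 (xs @ B # ys) = xs @ b0 # (B - b0) # ys"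
  unfolding toggle_def using takeWhile_dropWhile_disjoint[of xs b0 B ys] by (simp add: Let_def)

definition coarsens :: "nat \<Rightarrow> nat set set \<Rightarrow> nat set \<Rightarrow> nat set list \<Rightarrow> bool" where
  "coarsens n s Z bs \<longleftrightarrow> disjoint_blocks bs \<and> \<Union>(set bs) \<subseteq> {1..n} \<and>
     (\<forall>b\<in>s. (\<exists>B'\<in>set bs. b \<subseteq> B') \<or> b \<inter> \<Union>(set bs) = {}) \<and> Z \<inter> \<Union>(set bs) = {}"

lemma coarsens_iff:
  assumes "(s, Z) \<in> PiP n"
  shows "(bs \<in> block_lists n \<and> psp_le (s, Z) (psp_of_blocks n bs)) \<longleftrightarrow> coarsens n s Z bs"
proof -
  have sub: "\<And>b. b \<in> s \<Longrightarrow> b \<subseteq> {1..n}" and Zs: "Z \<subseteq> {1..n}"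
    using assms unfolding PiP_def partition_on_def by auto
  have eq: "\<And>b. b\<in>s \<Longrightarrow> (b \<subseteq> {1..n} - \<Union>(set bs) \<longleftrightarrow> b \<inter> \<Union>(set bs) = {})" using sub by blast
  have Zeq: "Z \<subseteq> {1..n} - \<Union>(set bs) \<longleftrightarrow> Z \<inter> \<Union>(set bs) = {}" using Zs by blast
  show ?thesis
    unfolding coarsens_def block_lists_def psp_le_def psp_of_blocks_def fst_conv snd_conv mem_Collect_eq
    using eq Zeq by (simp cong: ball_cong)
qed

locale toggle_block =
  fixes n :: nat and s :: "nat set set" and Z :: "nat set" and b0 :: "nat set"
  assumes PiP: "(s, Z) \<in> PiP n" and b0: "b0 \<in> s"
begin

lemma b0_props: "b0 \<noteq> {}" "b0 \<subseteq> {1..n}" "b0 \<inter> Z = {}"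
  using PiP_D(5)[OF PiP b0] by auto

lemma disjoint_b0: "b \<in> s \<Longrightarrow> b \<noteq> b0 \<Longrightarrow> b \<inter> b0 = {}"
  using disjointD[OF PiP_D(3)[OF PiP] _ b0] by blast

lemma b0_subset_block:
  assumes "coarsens n s Z bs" "B \<in> set bs" "b0 \<inter> B \<noteq> {}"
  shows "b0 \<subseteq> B"
proof -
  have o: "disjoint_blocks bs" using assms(1) unfolding coarsens_def by simp
  have "\<forall>b\<in>s. (\<exists>B'\<in>set bs. b \<subseteq> B') \<or> b \<inter> \<Union>(set bs) = {}"
    using assms(1) unfolding coarsens_def by simp
  then have "(\<exists>B'\<in>set bs. b0 \<subseteq> B') \<or> b0 \<inter> \<Union>(set bs) = {}" using b0 by simp
  then show ?thesis
  proof
    assume "\<exists>B'\<in>set bs. b0 \<subseteq> B'"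
    then obtain B' where B': "B' \<in> set bs" "b0 \<subseteq> B'" by blast
    then have "B' \<inter> B \<noteq> {}" using assms(3) by blast
    then have "B' = B" using disjoint_blockdisjoint_b0[OF o B'(1) assms(2)] by blast
    then show ?thesis using B' by simp
  next
    assume "b0 \<inter> \<Union>(set bs) = {}" then show ?thesis using assms(2,3) by blast
  qed
qed

lemma coarsens_shapes:
  assumes "coarsens n s Z bs"
  shows "(\<forall>B\<in>set bs. b0 \<inter> B = {})
    \<or> (\<exists>xs. (\<forall>B\<in>set xs. b0 \<inter> B = {}) \<and> bs = xs @ [b0])
    \<or> (\<exists>xs C ys. (\<forall>B\<in>set xs. b0 \<inter> B = {}) \<and> bs = xs @ b0 # C # ys)
    \<or> (\<exists>xs B ys. (\<forall>B\<in>set xs. b0 \<inter> B = {}) \<and> b0 \<subseteq> B \<and> B \<noteq> b0 \<and> bs = xs @ B # ys)"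
proof (cases "dropWhile (\<lambda>B. b0 \<inter> B = {}) bs")
  case Nil
  then show ?thesis by (simp add: dropWhile_eq_Nil_conv)
next
  case (Cons B r)
  define xs where "xs = takeWhile (\<lambda>B. b0 \<inter> B = {}) bs"
  have xs: "\<forall>B\<in>set xs. b0 \<inter> B = {}" unfolding xs_def by (auto dest: set_takeWhileD)
  have bs: "bs = xs @ B # r" unfolding xs_def using Cons takeWhile_dropWhile_id by metis
  have "b0 \<inter> B \<noteq> {}" using hd_dropWhile[of "\<lambda>B. b0 \<inter> B = {}" bs] Cons by simp
  then have sub: "b0 \<subseteq> B" using b0_subset_block[OF assms, of B] bs by simp
  show ?thesis
  proof (cases "B = b0")
    case True
    show ?thesis
    proof (cases r)
      case Nil then show ?thesis using xs bs True by auto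
    next
      case (Cons C ys)
      then have "\<exists>xs' C' ys'. (\<forall>B\<in>set xs'. b0 \<inter> B = {}) \<and> bs = xs' @ b0 # C' # ys'"
        using xs bs True by blast
      then show ?thesis by blast
    qed
  next
    case False
    then show ?thesis using xs bs sub by blast
  qed
qed

lemma coarsens_append_block:
  assumes c: "coarsens n s Z bs" and d: "\<forall>B\<in>set bs. b0 \<inter> B = {}"
  shows "coarsens n s Z (bs @ [b0])"
proof -
  have o: "disjoint_blocks (bs @ [b0])" using c d b0_props unfolding coarsens_def disjoint_blocks_append by auto
  have u: "\<Union>(set (bs @ [b0])) \<subseteq> {1..n}" using c b0_props unfolding coarsens_def by auto
  have z: "Z \<inter> \<Union>(set (bs @ [b0])) = {}" using c b0_props unfolding coarsens_def by auto
  have w: "\<forall>b\<in>s. (\<exists>B'\<in>set (bs @ [b0]). b \<subseteq> B') \<or> b \<inter> \<Union>(set (bs @ [b0])) = {}"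
  proof
    fix b assume bs: "b \<in> s"
    show "(\<exists>B'\<in>set (bs @ [b0]). b \<subseteq> B') \<or> b \<inter> \<Union>(set (bs @ [b0])) = {}"
    proof (cases "b = b0")
      case True then show ?thesis by auto
    next
      case False
      then have bb: "b \<inter> b0 = {}" using disjoint_b0 bs by auto
      have "(\<exists>B'\<in>set bs. b \<subseteq> B') \<or> b \<inter> \<Union>(set bs) = {}"
        using c bs unfolding coarsens_def by blast
      then show ?thesis using bb by auto
    qed
  qed
  show ?thesis unfolding coarsens_def using o u z w by blast
qed

lemma coarsens_butlast_block:
  assumes c: "coarsens n s Z (xs @ [b0])" and d: "\<forall>B\<in>set xs. b0 \<inter> B = {}"
  shows "coarsens n s Z xs"
  unfolding coarsens_def
proof (intro conjI ballI)
  show "disjoint_blocks xs" "\<Union>(set xs) \<subseteq> {1..n}" "Z \<inter> \<Union>(set xs) = {}"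
    using c unfolding coarsens_def disjoint_blocks_append by auto
  fix b assume bs: "b \<in> s"
  show "(\<exists>B'\<in>set xs. b \<subseteq> B') \<or> b \<inter> \<Union>(set xs) = {}"
  proof (cases "b = b0")
    case True then show ?thesis using d by auto
  next
    case False
    then have bb: "b \<inter> b0 = {}" "b \<noteq> {}" using disjoint_b0 PiP_D(5)[OF PiP] bs by auto
    have "(\<exists>B'\<in>set (xs @ [b0]). b \<subseteq> B') \<or> b \<inter> \<Union>(set (xs @ [b0])) = {}"
      using c bs unfolding coarsens_def by blast
    then show ?thesis using bb by auto
  qed
qed

lemma coarsens_merge_block:
  assumes c: "coarsens n s Z (xs @ b0 # C # ys)"
  shows "coarsens n s Z (xs @ (b0 \<union> C) # ys)"
proof -
  have U: "\<Union>(set (xs @ (b0 \<union> C) # ys)) = \<Union>(set (xs @ b0 # C # ys))" by auto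
  show ?thesis
    unfolding coarsens_def U
  proof (intro conjI ballI)
    show "disjoint_blocks (xs @ (b0 \<union> C) # ys)" using c unfolding coarsens_def disjoint_blocks_append by auto
    show "\<Union>(set (xs @ b0 # C # ys)) \<subseteq> {1..n}" "Z \<inter> \<Union>(set (xs @ b0 # C # ys)) = {}"
      using c unfolding coarsens_def by auto
    fix b assume bs: "b \<in> s"
    then have "(\<exists>B'\<in>set (xs @ b0 # C # ys). b \<subseteq> B') \<or> b \<inter> \<Union>(set (xs @ b0 # C # ys)) = {}"
      using c unfolding coarsens_def by blast
    then show "(\<exists>B'\<in>set (xs @ (b0 \<union> C) # ys). b \<subseteq> B') \<or> b \<inter> \<Union>(set (xs @ b0 # C # ys)) = {}"
      by auto
  qed
qed

lemma coarsens_split_block: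
  assumes c: "coarsens n s Z (xs @ B # ys)" and sub: "b0 \<subseteq> B" "B \<noteq> b0"
  shows "coarsens n s Z (xs @ b0 # (B - b0) # ys)"
proof -
  have U: "\<Union>(set (xs @ b0 # (B - b0) # ys)) = \<Union>(set (xs @ B # ys))" using sub by auto
  show ?thesis
    unfolding coarsens_def U
  proof (intro conjI ballI)
    show "disjoint_blocks (xs @ b0 # (B - b0) # ys)" using c sub b0_props(1) unfolding coarsens_def disjoint_blocks_append by auto
    show "\<Union>(set (xs @ B # ys)) \<subseteq> {1..n}" "Z \<inter> \<Union>(set (xs @ B # ys)) = {}"
      using c unfolding coarsens_def by auto
    fix b assume bs: "b \<in> s"
    then have "(\<exists>B'\<in>set (xs @ B # ys). b \<subseteq> B') \<or> b \<inter> \<Union>(set (xs @ B # ys)) = {}"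
      using c unfolding coarsens_def by blast
    moreover have "b \<subseteq> B \<Longrightarrow> b \<subseteq> b0 \<or> b \<subseteq> B - b0"
      using disjoint_b0[OF bs] by auto
    ultimately show "(\<exists>B'\<in>set (xs @ b0 # (B - b0) # ys). b \<subseteq> B') \<or> b \<inter> \<Union>(set (xs @ B # ys)) = {}"
      by auto
  qed
qed

lemma toggle_props:
  assumes c: "coarsens n s Z bs"
  shows "coarsens n s Z (toggle b0 bs) \<and> toggle b0 (toggle b0 bs) = bs
     \<and> (length (toggle b0 bs) = Suc (length bs) \<or> Suc (length (toggle b0 bs)) = length bs)"
  using coarsens_shapes[OF c]
proof (elim disjE exE conjE)
  assume d: "\<forall>B\<in>set bs. b0 \<inter> B = {}"
  then show ?thesis using toggle_disjoint[OF d] toggle_last[OF d b0_props(1)] coarsens_append_block[OF c d] by simp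
next
  fix xs assume d: "\<forall>B\<in>set xs. b0 \<inter> B = {}" and bs: "bs = xs @ [b0]"
  then show ?thesis using toggle_disjoint[OF d] toggle_last[OF d b0_props(1)] coarsens_butlast_block[OF c[unfolded bs] d] by simp
next
  fix xs C ys assume d: "\<forall>B\<in>set xs. b0 \<inter> B = {}" and bs: "bs = xs @ b0 # C # ys"
  have C: "C \<noteq> {}" "C \<inter> b0 = {}" using c unfolding bs coarsens_def disjoint_blocks_append by auto
  have "b0 \<inter> (b0 \<union> C) \<noteq> {}" "b0 \<union> C \<noteq> b0" "b0 \<union> C - b0 = C" using C b0_props(1) by auto
  then show ?thesis using toggle_merge[OF d b0_props(1)] toggle_split[OF d, of "b0 \<union> C" ys] coarsens_merge_block[OF c[unfolded bs]] bs
    by simp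
next
  fix xs B ys assume d: "\<forall>B\<in>set xs. b0 \<inter> B = {}" and sub: "b0 \<subseteq> B" "B \<noteq> b0" and bs: "bs = xs @ B # ys"
  have "b0 \<inter> B \<noteq> {}" using sub b0_props(1) by auto
  moreover have "b0 \<union> (B - b0) = B" using sub by auto
  ultimately show ?thesis using toggle_split[OF d _ sub(2)] toggle_merge[OF d b0_props(1), of "B - b0" ys] coarsens_split_block[OF c[unfolded bs] sub] bs
    by simp
qed

lemma sum_signs_coarsens_eq_0: "(\<Sum>bs\<in>{bs. coarsens n s Z bs}. (-1::int) ^ length bs) = 0"
proof (rule sum_involution_eq_0[where h = "toggle b0"])
  fix bs assume "bs \<in> {bs. coarsens n s Z bs}"
  then have c: "coarsens n s Z bs" by simp
  from toggle_props[OF c] have "length (toggle b0 bs) = Suc (length bs) \<or> Suc (length (toggle b0 bs)) = length bs"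
    by blast
  then show "(-1::int) ^ length (toggle b0 bs) + (-1) ^ length bs = 0"
  proof
    assume "length (toggle b0 bs) = Suc (length bs)" then show ?thesis by simp
  next
    assume e: "Suc (length (toggle b0 bs)) = length bs" then show ?thesis by (simp add: e[symmetric])
  qed
  from toggle_props[OF c] show "toggle b0 bs \<in> {bs. coarsens n s Z bs}" "toggle b0 (toggle b0 bs) = bs" by auto
  from toggle_props[OF c] show "toggle b0 bs \<noteq> bs" by auto
qed

end

lemma sum_signs_block_lists_above:
  assumes pi: "\<pi> \<in> PiP n"
  shows "(\<Sum>bs\<in>{bs\<in>block_lists n. psp_le \<pi> (psp_of_blocks n bs)}. (-1::int) ^ length bs) = (if \<pi> = PiP_top n then 1 else 0)"
proof -
  obtain s Z where sZ: "\<pi> = (s, Z)" by (cases \<pi>)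
  have set_eq: "{bs\<in>block_lists n. psp_le \<pi> (psp_of_blocks n bs)} = {bs. coarsens n s Z bs}"
    using coarsens_iff[of s Z n] pi sZ by auto
  show ?thesis
  proof (cases "s = {}")
    case True
    then have "partition_on ({1..n} - Z) {}" "Z \<subseteq> {1..n}" using pi sZ unfolding PiP_def by auto
    then have Z: "Z = {1..n}" using partition_onD1 by fastforce
    have "{bs. coarsens n s Z bs} = {[]}"
    proof (intro set_eqI iffI)
      fix bs assume "bs \<in> {bs. coarsens n s Z bs}"
      then have "disjoint_blocks bs" "\<Union>(set bs) \<subseteq> {1..n}" "{1..n} \<inter> \<Union>(set bs) = {}" unfolding coarsens_def Z by auto
      then have "disjoint_blocks bs" "\<Union>(set bs) = {}" by blast+
      then show "bs \<in> {[]}" using disjoint_blocks_nonempty by (cases bs) auto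
    qed (auto simp: coarsens_def)
    then show ?thesis using set_eq sZ True Z by (simp add: PiP_top_def)
  next
    case False
    then obtain b0 where b0: "b0 \<in> s" by auto
    interpret toggle_block n s Z b0 using pi sZ b0 by unfold_locales auto
    have "\<pi> \<noteq> PiP_top n" using sZ False by (simp add: PiP_top_def)
    then show ?thesis using sum_signs_coarsens_eq_0 set_eq by simp
  qed
qed

definition signed_orderings :: "nat \<Rightarrow> psp \<Rightarrow> int" where
  "signed_orderings n \<sigma> = (\<Sum>bs\<in>{bs\<in>block_lists n. psp_of_blocks n bs = \<sigma>}. (-1) ^ length bs)"

lemma sum_signed_orderings_above:
  assumes pi: "\<pi> \<in> PiP n"
  shows "(\<Sum>\<sigma>\<in>{\<sigma>\<in>PiP n. psp_le \<pi> \<sigma>}. signed_orderings n \<sigma>) = (if \<pi> = PiP_top n then 1 else 0)"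
proof -
  have "(\<Sum>\<sigma>\<in>{\<sigma>\<in>PiP n. psp_le \<pi> \<sigma>}. signed_orderings n \<sigma>)
     = (\<Sum>\<sigma>\<in>{\<sigma>\<in>PiP n. psp_le \<pi> \<sigma>}. \<Sum>bs\<in>{bs\<in>{bs\<in>block_lists n. psp_le \<pi> (psp_of_blocks n bs)}. psp_of_blocks n bs = \<sigma>}. (-1) ^ length bs)"
    unfolding signed_orderings_def by (rule sum.cong) (auto intro!: sum.cong)
  also have "\<dots> = (\<Sum>bs\<in>{bs\<in>block_lists n. psp_le \<pi> (psp_of_blocks n bs)}. (-1) ^ length bs)"
    by (rule sum.group) (auto simp: finite_block_lists finite_PiP psp_of_blocks_PiP)
  finally show ?thesis using sum_signs_block_lists_above[OF pi] by simp
qed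

lemma sum_signed_orderings:
  assumes "G \<subseteq> PiP n"
  shows "(\<Sum>\<sigma>\<in>G. signed_orderings n \<sigma>) = (\<Sum>bs\<in>{bs\<in>block_lists n. psp_of_blocks n bs \<in> G}. (-1) ^ length bs)"
proof -
  have "(\<Sum>\<sigma>\<in>G. signed_orderings n \<sigma>)
     = (\<Sum>\<sigma>\<in>G. \<Sum>bs\<in>{bs\<in>{bs\<in>block_lists n. psp_of_blocks n bs \<in> G}. psp_of_blocks n bs = \<sigma>}. (-1) ^ length bs)"
    unfolding signed_orderings_def by (rule sum.cong) (auto intro!: sum.cong)
  also have "\<dots> = (\<Sum>bs\<in>{bs\<in>block_lists n. psp_of_blocks n bs \<in> G}. (-1) ^ length bs)"
    using assms finite_subset[OF assms finite_PiP] by (intro sum.group) (auto simp: finite_block_lists)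
  finally show ?thesis .
qed

lemma comp_descent_set_eq_image: "comp_descent_set c = (\<lambda>j. sum_list (take j c)) ` {1..<length c}"
  unfolding comp_descent_set_def by auto

lemma comp_descent_set_Nil: "comp_descent_set [] = {}"
  by (simp add: comp_descent_set_eq_image)

lemma finite_comp_descent_set: "finite (comp_descent_set c)"
  by (simp add: comp_descent_set_eq_image)

lemma comp_descent_set_Cons:
  "comp_descent_set (a # c) = (if c = [] then {} else insert a ((+) a ` comp_descent_set c))"
proof (cases "c = []")
  case False
  then have I: "{1..<length (a # c)} = insert 1 (Suc ` {1..<length c})"
    by (cases c) (auto simp: image_Suc_atLeastLessThan)
  show ?thesis using False unfolding comp_descent_set_eq_image I image_insert image_image by simp
qed (simp add: comp_descent_set_eq_image)

definition pos_butlast :: "nat list \<Rightarrow> bool" where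
  "pos_butlast c \<longleftrightarrow> (\<forall>x\<in>set (butlast c). 0 < x)"

lemma CP_iff: "c \<in> CP n \<longleftrightarrow> c \<noteq> [] \<and> sum_list c = n \<and> pos_butlast c"
  unfolding CP_def pos_butlast_def by auto

lemma pos_butlast_Cons: "c \<noteq> [] \<Longrightarrow> pos_butlast (a # c) \<longleftrightarrow> 0 < a \<and> pos_butlast c"
  unfolding pos_butlast_def by auto

lemma comp_descent_set_pos: "pos_butlast c \<Longrightarrow> x \<in> comp_descent_set c \<Longrightarrow> 0 < x"
proof (induction c arbitrary: x)
  case Nil then show ?case by (simp add: comp_descent_set_Nil)
next
  case (Cons a c)
  show ?case
  proof (cases "c = []")
    case True then show ?thesis using Cons by (simp add: comp_descent_set_Cons)
  next
    case False
    then show ?thesis using Cons pos_butlast_Cons[OF False] by (auto simp: comp_descent_set_Cons)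
  qed
qed

lemma card_comp_descent_set: "pos_butlast c \<Longrightarrow> card (comp_descent_set c) = length c - 1"
proof (induction c)
  case Nil then show ?case by (simp add: comp_descent_set_Nil)
next
  case (Cons a c)
  show ?case
  proof (cases "c = []")
    case True then show ?thesis by (simp add: comp_descent_set_Cons)
  next
    case False
    have p: "pos_butlast c" using Cons.prems pos_butlast_Cons[OF False] by simp
    have "a \<notin> (+) a ` comp_descent_set c" using comp_descent_set_pos[OF p, of 0] by auto
    then have "card (comp_descent_set (a # c)) = Suc (card (comp_descent_set c))"
      using False finite_comp_descent_set by (simp add: comp_descent_set_Cons card_image)
    then show ?thesis using Cons.IH[OF p] False by simp
  qed
qed

lemma comp_descent_set_inj:
  assumes "pos_butlast c" "pos_butlast d" "c \<noteq> []" "d \<noteq> []" "sum_list c = sum_list d" "comp_descent_set c = comp_descent_set d"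
  shows "c = d"
  using assms
proof (induction c arbitrary: d)
  case Nil then show ?case by simp
next
  case (Cons a c)
  obtain b d' where d: "d = b # d'" using Cons.prems(4) by (cases d) auto
  show ?case
  proof (cases "c = []")
    case True
    then have "comp_descent_set d = {}" using Cons.prems by (simp add: comp_descent_set_Cons)
    then have "d' = []" using d by (auto simp: comp_descent_set_Cons split: if_splits)
    then show ?thesis using True Cons.prems d by simp
  next
    case False
    have "comp_descent_set (a # c) \<noteq> {}" using False by (simp add: comp_descent_set_Cons)
    then have "comp_descent_set d \<noteq> {}" using Cons.prems(6) by simp
    then have d'ne: "d' \<noteq> []" using d by (auto simp: comp_descent_set_Cons)
    have pc: "pos_butlast c" using Cons.prems(1) pos_butlast_Cons[OF False] by simp
    have pd: "pos_butlast d'" using Cons.prems(2) pos_butlast_Cons[OF d'ne] d by simp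
    have eq: "insert a ((+) a ` comp_descent_set c) = insert b ((+) b ` comp_descent_set d')"
      using Cons.prems(6) d False d'ne by (simp add: comp_descent_set_Cons)
    have ab: "a = b"
    proof (rule ccontr)
      assume "a \<noteq> b"
      have "a \<in> (+) b ` comp_descent_set d'" using eq \<open>a \<noteq> b\<close> by blast
      then have "a > b" using comp_descent_set_pos[OF pd] by auto
      moreover have "b \<in> insert a ((+) a ` comp_descent_set c)" using eq by simp
      then have "b \<in> (+) a ` comp_descent_set c" using \<open>a \<noteq> b\<close> by simp
      then have "b > a" using comp_descent_set_pos[OF pc] by auto
      ultimately show False by simp
    qed
    have "a \<notin> (+) a ` comp_descent_set c" "a \<notin> (+) a ` comp_descent_set d'" using comp_descent_set_pos[OF pc, of 0] comp_descent_set_pos[OF pd, of 0] by auto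
    then have "(+) a ` comp_descent_set c = (+) a ` comp_descent_set d'" using eq ab by (metis Diff_insert_absorb)
    then have "comp_descent_set c = comp_descent_set d'" by (simp add: inj_image_eq_iff)
    then have "c = d'" using Cons.IH[OF pc pd False d'ne] Cons.prems(5) d ab by simp
    then show ?thesis using d ab by simp
  qed
qed

lemma comp_descent_set_merge: "comp_descent_set (xs @ (a + b) # ys) \<subseteq> comp_descent_set (xs @ a # b # ys)"
  by (induction xs) (auto simp: comp_descent_set_Cons)

lemma comp_cover_props:
  assumes "comp_cover x y" "pos_butlast x"
  shows "pos_butlast y \<and> y \<noteq> [] \<and> sum_list y = sum_list x \<and> comp_descent_set y \<subseteq> comp_descent_set x \<and> length y < length x"
  using assms(1)
proof cases
  case (1 xs a b ys)
  have "pos_butlast y"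
    using assms(2) unfolding 1 pos_butlast_def by (cases ys) (auto simp: butlast_append)
  then show ?thesis using 1 comp_descent_set_merge by simp
qed

lemma comp_le_props:
  assumes "comp_le z x" "pos_butlast z" "z \<noteq> []"
  shows "pos_butlast x \<and> x \<noteq> [] \<and> sum_list x = sum_list z \<and> comp_descent_set x \<subseteq> comp_descent_set z \<and> (x = z \<or> length x < length z)"
  using assms(1) unfolding comp_le_def
proof (induction rule: rtranclp_induct)
  case base then show ?case using assms by simp
next
  case (step y x)
  then show ?case using comp_cover_props[OF step(2)] by auto
qed

lemma comp_le_len: "comp_le x y \<Longrightarrow> x = y \<or> length y < length x"
  unfolding comp_le_def
proof (induction rule: rtranclp_induct)
  case (step y z)
  then show ?case by (auto elim: comp_cover.cases)
qed simp

lemma comp_le_Cons: "comp_le x y \<Longrightarrow> comp_le (a # x) (a # y)"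
  unfolding comp_le_def
proof (induction rule: rtranclp_induct)
  case (step y z)
  from step(2) have "comp_cover (a # y) (a # z)"
  proof cases
    case (1 xs p q ys)
    then show ?thesis using comp_cover.intros[of "a # xs" p q ys] by simp
  qed
  then show ?case using step(3) by simp
qed simp

lemma comp_descent_set_surj:
  assumes "pos_butlast z" "z \<noteq> []" "S \<subseteq> comp_descent_set z"
  shows "\<exists>x. comp_le z x \<and> comp_descent_set x = S"
  using assms
proof (induction z arbitrary: S)
  case Nil then show ?case by simp
next
  case (Cons a z')
  show ?case
  proof (cases "z' = []")
    case True
    then have "S = {}" using Cons.prems by (simp add: comp_descent_set_Cons)
    then show ?thesis using True by (intro exI[of _ "[a]"]) (simp add: comp_le_def comp_descent_set_Cons)
  next
    case False
    have p: "pos_butlast z'" using Cons.prems(1) pos_butlast_Cons[OF False] by simp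
    define T where "T = {y\<in>comp_descent_set z'. a + y \<in> S}"
    have ST: "S - {a} = (+) a ` T" using Cons.prems(3) False comp_descent_set_pos[OF p, of 0] unfolding T_def by (auto simp: comp_descent_set_Cons)
    obtain x' where x': "comp_le z' x'" "comp_descent_set x' = T"
      using Cons.IH[OF p False, of T] unfolding T_def by blast
    have x'ne: "x' \<noteq> []" using comp_le_props[OF x'(1) p False] by simp
    show ?thesis
    proof (cases "a \<in> S")
      case True
      have "comp_descent_set (a # x') = S" using x' x'ne ST True by (auto simp: comp_descent_set_Cons)
      then show ?thesis using comp_le_Cons[OF x'(1)] by blast
    next
      case False
      obtain h t where ht: "x' = h # t" using x'ne by (cases x') auto
      have cov: "comp_cover (a # h # t) ((a + h) # t)" using comp_cover.intros[of "[]" a h t] by simp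
      have "comp_le (a # z') ((a + h) # t)"
        using comp_le_Cons[OF x'(1), of a] cov ht unfolding comp_le_def by simp
      moreover have "comp_descent_set ((a + h) # t) = (+) a ` comp_descent_set x'"
        unfolding ht by (simp add: comp_descent_set_Cons image_image add.assoc)
      then have "comp_descent_set ((a + h) # t) = S" using x' ST False by auto
      ultimately show ?thesis by blast
    qed
  qed
qed

lemma length_le_sum_list: "\<forall>x\<in>set xs. 0 < x \<Longrightarrow> length xs \<le> sum_list (xs::nat list)"
  by (induction xs) (auto simp: Suc_le_eq)

lemma finite_CP: "finite (CP n)"
proof (rule finite_subset)
  show "CP n \<subseteq> {xs. set xs \<subseteq> {0..n} \<and> length xs \<le> Suc n}"
  proof
    fix c assume c: "c \<in> CP n"
    then have ne: "c \<noteq> []" and s: "sum_list c = n" and p: "\<forall>x\<in>set (butlast c). 0 < x"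
      unfolding CP_def by auto
    have "set c \<subseteq> {0..n}" using s member_le_sum_list[of _ c] by fastforce
    moreover have "length (butlast c) \<le> sum_list (butlast c)"
      using p length_le_sum_list by blast
    moreover have "sum_list (butlast c) \<le> n" using s ne by (metis append_butlast_last_id le_add1 sum_list_append)
    ultimately show "c \<in> {xs. set xs \<subseteq> {0..n} \<and> length xs \<le> Suc n}" by auto
  qed
  show "finite {xs. set xs \<subseteq> {0..n} \<and> length xs \<le> Suc n}" by (rule finite_lists_length_le) simp
qed

lemma porder_CP: "porder_on (CP n) comp_le"
  unfolding porder_on_def
proof (intro conjI ballI impI)
  fix x show "comp_le x x" unfolding comp_le_def by simp
next
  fix x y z assume "comp_le x y" "comp_le y z" then show "comp_le x z" unfolding comp_le_def by simp
next
  fix x y assume a: "comp_le x y" and b: "comp_le y x"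
  then show "x = y" using comp_le_len[OF a] comp_le_len[OF b] by auto
qed

lemma sum_butlast_last: "c \<noteq> [] \<Longrightarrow> sum_list (butlast c) + last c = sum_list (c::nat list)"
  by (metis append_butlast_last_id sum_list_append sum_list.Cons sum_list.Nil add_0_right)

lemma comp_type_IP: "c \<in> CP n \<Longrightarrow> comp_type c \<in> IP n"
  unfolding CP_def IP_def comp_type_def using sum_butlast_last[of c] by (auto simp: sum_mset_sum_list)

lemma comp_type_cover: "comp_cover x y \<Longrightarrow> ip_cover (comp_type x) (comp_type y)"
proof (induction rule: comp_cover.induct)
  case (1 xs a b ys)
  show ?case
  proof (cases "ys = []")
    case True
    then show ?thesis using ip_cover.point[of "mset xs" a b]
      by (simp add: comp_type_def butlast_append ac_simps)
  next
    case False
    then show ?thesis using ip_cover.merge[of "mset xs + mset (butlast ys)" a b "last ys"]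
      by (simp add: comp_type_def butlast_append ac_simps)
  qed
qed

lemma comp_type_mono: "comp_le x y \<Longrightarrow> ip_le (comp_type x) (comp_type y)"
  unfolding comp_le_def ip_le_def
proof (induction rule: rtranclp_induct)
  case (step y z)
  then show ?case using comp_type_cover[OF step(2)] by simp
qed simp

lemma descents_subset: "descents t n \<subseteq> {1..<n}" unfolding descents_def by auto

text \<open>If the pointed part is \<open>0\<close> and \<open>k \<ge> 2\<close>, then \<open>n\<close> is a partial sum of \<open>c\<close>, and no
  permutation of \<open>{1..n}\<close> has a descent at \<open>n\<close>; this matches the convention \<open>\<beta> = 0\<close>.\<close>

lemma beta_eq_card_descents:
  assumes z: "z \<in> CP n"
  shows "beta z = int (card {t. t permutes {1..n} \<and> descents t n = comp_descent_set z})"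
proof -
  have ne: "z \<noteq> []" and s: "sum_list z = n" using z unfolding CP_def by auto
  show ?thesis
  proof (cases "last z > 0")
    case True then show ?thesis unfolding beta_def using s by simp
  next
    case False
    then have l0: "last z = 0" by simp
    show ?thesis
    proof (cases "length z \<ge> 2")
      case True
      have "sum_list (take (length z - 1) z) = n"
        using sum_butlast_last[OF ne] l0 s by (simp add: butlast_conv_take)
      then have "n \<in> comp_descent_set z" unfolding comp_descent_set_def using True
        by (intro CollectI exI[of _ "length z - 1"]) auto
      then have e: "{t. t permutes {1..n} \<and> descents t n = comp_descent_set z} = {}" using descents_subset by fastforce
      show ?thesis unfolding beta_def e using l0 True by simp
    next
      case False
      then have "length z = 1" using ne by (cases z) (auto simp: not_le)
      then have zz: "z = [0]" using l0 by (cases z) auto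
      then have n0: "n = 0" using s by simp
      have "comp_descent_set z = {}" using zz by (simp add: comp_descent_set_Cons)
      moreover have "{t. t permutes {1..0::nat} \<and> descents t 0 = {}} = {id}"
        by (auto simp: descents_def permutes_empty)
      ultimately show ?thesis unfolding beta_def using zz n0 by simp
    qed
  qed
qed

section \<open>Permutations with descents in a given set\<close>

declare upt_Suc[simp del]

definition ascends_off :: "nat set \<Rightarrow> nat list \<Rightarrow> bool" where
  "ascends_off S L \<longleftrightarrow> (\<forall>i. Suc i < length L \<longrightarrow> Suc i \<notin> S \<longrightarrow> L ! i \<le> L ! Suc i)"

lemma descents_subset_iff_ascends_off: "descents t n \<subseteq> S \<longleftrightarrow> ascends_off S (map t [1..<Suc n])"
proof
  assume d: "descents t n \<subseteq> S"
  show "ascends_off S (map t [1..<Suc n])" unfolding ascends_off_def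
  proof (intro allI impI)
    fix i assume i: "Suc i < length (map t [1..<Suc n])" "Suc i \<notin> S"
    then have "Suc i \<notin> descents t n" using d by blast
    then have "t (Suc i) \<le> t (Suc (Suc i))" using i(1) unfolding descents_def by auto
    then show "map t [1..<Suc n] ! i \<le> map t [1..<Suc n] ! Suc i" using i(1) by (simp add: nth_map_upt)
  qed
next
  assume a: "ascends_off S (map t [1..<Suc n])"
  show "descents t n \<subseteq> S"
  proof
    fix k assume k: "k \<in> descents t n"
    then obtain i where i: "k = Suc i" "Suc i < n" "t (Suc i) > t (Suc (Suc i))"
      unfolding descents_def by (cases k) auto
    show "k \<in> S"
    proof (rule ccontr)
      assume "k \<notin> S"
      then have "map t [1..<Suc n] ! i \<le> map t [1..<Suc n] ! Suc i" using a i unfolding ascends_off_def by auto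
      then show False using i by (simp add: nth_map_upt)
    qed
  qed
qed

definition perm_of_list :: "nat list \<Rightarrow> nat \<Rightarrow> nat" where
  "perm_of_list L i = (if i \<in> {1..length L} then L ! (i - 1) else i)"

lemma map_perm_of_list: "map (perm_of_list L) [1..<Suc (length L)] = L"
  by (rule nth_equalityI) (auto simp: perm_of_list_def nth_map_upt)

lemma perm_of_list_permutes:
  assumes "distinct L" "set L = {1..length L}"
  shows "perm_of_list L permutes {1..length L}"
proof (rule bij_imp_permutes)
  have "perm_of_list L ` {1..length L} = (\<lambda>k. L ! k) ` {..<length L}"
    unfolding perm_of_list_def by (force simp: image_iff Bex_def intro: exI[of _ "Suc _"])
  also have "\<dots> = {1..length L}" using assms(2) by (auto simp: set_conv_nth)
  finally have "perm_of_list L ` {1..length L} = {1..length L}" .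
  moreover have "inj_on (perm_of_list L) {1..length L}"
    using assms(1) by (auto simp: inj_on_def perm_of_list_def nth_eq_iff_index_eq)
  ultimately show "bij_betw (perm_of_list L) {1..length L} {1..length L}"
    by (simp add: bij_betw_def)
qed (auto simp: perm_of_list_def)

lemma perm_of_list_map:
  assumes "t permutes {1..n}" shows "perm_of_list (map t [1..<Suc n]) = t"
proof
  fix i show "perm_of_list (map t [1..<Suc n]) i = t i"
    using permutes_not_in[OF assms, of i] by (auto simp: perm_of_list_def nth_map_upt)
qed

lemma card_permutes_descents_subset:
  "card {t. t permutes {1..n} \<and> descents t n \<subseteq> S} = card {L. distinct L \<and> set L = {1..n} \<and> ascends_off S L}"
  (is "card ?P = card ?L")
proof (rule bij_betw_same_card, rule bij_betw_byWitness[where f' = perm_of_list])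
  have len: "length L = n" if "L \<in> ?L" for L using that distinct_card[of L] by auto
  show "\<forall>t\<in>?P. perm_of_list (map t [1..<Suc n]) = t" using perm_of_list_map by blast
  show "\<forall>L\<in>?L. map (perm_of_list L) [1..<Suc n] = L"
  proof
    fix L assume "L \<in> ?L" then show "map (perm_of_list L) [1..<Suc n] = L"
      using map_perm_of_list[of L] len by simp
  qed
  show "(\<lambda>t. map t [1..<Suc n]) ` ?P \<subseteq> ?L"
  proof
    fix L assume "L \<in> (\<lambda>t. map t [1..<Suc n]) ` ?P"
    then obtain t where t: "t permutes {1..n}" "descents t n \<subseteq> S" and L: "L = map t [1..<Suc n]" by blast
    show "L \<in> ?L" using permutes_inj_on[OF t(1)] permutes_image[OF t(1)] t(2) descents_subset_iff_ascends_off
      unfolding L by (simp add: distinct_map atLeastLessThanSuc_atLeastAtMost)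
  qed
  show "perm_of_list ` ?L \<subseteq> ?P"
  proof
    fix t assume "t \<in> perm_of_list ` ?L"
    then obtain L where L: "L \<in> ?L" and t: "t = perm_of_list L" by blast
    have n: "length L = n" using len[OF L] .
    have "t permutes {1..n}" using perm_of_list_permutes[of L] L t n by simp
    moreover have "descents t n \<subseteq> S"
      using descents_subset_iff_ascends_off[of t n S] map_perm_of_list[of L] L t n by simp
    ultimately show "t \<in> ?P" by simp
  qed
qed

fun split_lengths :: "nat list \<Rightarrow> 'a list \<Rightarrow> 'a list list" where
  "split_lengths [] L = []"
| "split_lengths (a # x) L = take a L # split_lengths x (drop a L)"

lemma concat_split_lengths: "sum_list x = length L \<Longrightarrow> concat (split_lengths x L) = L"
  by (induction x arbitrary: L) auto

lemma map_length_split_lengths: "sum_list x = length L \<Longrightarrow> map length (split_lengths x L) = x"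
  by (induction x arbitrary: L) auto

lemma split_lengths_concat: "split_lengths (map length ls) (concat ls) = ls"
  by (induction ls) auto

lemma ascends_off_empty: "ascends_off {} L \<longleftrightarrow> sorted L"
  unfolding ascends_off_def sorted_iff_nth_Suc by simp

lemma ascends_off_shift:
  assumes "0 < a" "a \<le> length L"
  shows "ascends_off (insert a ((+) a ` S)) L \<longleftrightarrow> ascends_off {} (take a L) \<and> ascends_off S (drop a L)"
proof
  assume A: "ascends_off (insert a ((+) a ` S)) L"
  show "ascends_off {} (take a L) \<and> ascends_off S (drop a L)"
  proof
    show "ascends_off {} (take a L)" unfolding ascends_off_def
    proof (intro allI impI)
      fix i assume i: "Suc i < length (take a L)"
      then have "Suc i \<notin> insert a ((+) a ` S)" "Suc i < length L" using assms by auto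
      then show "take a L ! i \<le> take a L ! Suc i" using A i unfolding ascends_off_def by auto
    qed
    show "ascends_off S (drop a L)" unfolding ascends_off_def
    proof (intro allI impI)
      fix i assume i: "Suc i < length (drop a L)" "Suc i \<notin> S"
      then have "Suc (a + i) \<notin> insert a ((+) a ` S)" "Suc (a + i) < length L" using assms by auto
      then have "L ! (a + i) \<le> L ! Suc (a + i)" using A unfolding ascends_off_def by auto
      then show "drop a L ! i \<le> drop a L ! Suc i" using assms by simp
    qed
  qed
next
  assume B: "ascends_off {} (take a L) \<and> ascends_off S (drop a L)"
  show "ascends_off (insert a ((+) a ` S)) L" unfolding ascends_off_def
  proof (intro allI impI)
    fix i assume i: "Suc i < length L" "Suc i \<notin> insert a ((+) a ` S)"
    show "L ! i \<le> L ! Suc i"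
    proof (cases "Suc i < a")
      case True
      then have "take a L ! i \<le> take a L ! Suc i" using B i unfolding ascends_off_def by auto
      then show ?thesis using True by simp
    next
      case False
      then have "Suc i > a" using i by auto
      then obtain j where j: "i = a + j" by (metis less_Suc_eq_le le_add_diff_inverse)
      have "Suc j \<notin> S" using i(2) j by auto
      moreover have "Suc j < length (drop a L)" using i j by auto
      ultimately have "drop a L ! j \<le> drop a L ! Suc j" using B unfolding ascends_off_def by auto
      then show ?thesis using j assms by simp
    qed
  qed
qed

lemma ascends_off_split_lengths:
  assumes "pos_butlast x" "x \<noteq> []" "sum_list x = length L"
  shows "ascends_off (comp_descent_set x) L \<longleftrightarrow> (\<forall>l\<in>set (split_lengths x L). sorted l)"
  using assms
proof (induction x arbitrary: L)
  case Nil then show ?case by simp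
next
  case (Cons a x)
  show ?case
  proof (cases "x = []")
    case True
    then show ?thesis using Cons.prems by (simp add: comp_descent_set_Cons ascends_off_empty)
  next
    case False
    have a: "0 < a" "pos_butlast x" using Cons.prems(1) pos_butlast_Cons[OF False] by auto
    have al: "a \<le> length L" using Cons.prems(3) by simp
    have "ascends_off (comp_descent_set (a # x)) L \<longleftrightarrow> ascends_off {} (take a L) \<and> ascends_off (comp_descent_set x) (drop a L)"
      using False ascends_off_shift[OF a(1) al] by (simp add: comp_descent_set_Cons)
    also have "\<dots> \<longleftrightarrow> sorted (take a L) \<and> (\<forall>l\<in>set (split_lengths x (drop a L)). sorted l)"
      using Cons.IH[OF a(2) False] Cons.prems(3) by (simp add: ascends_off_empty)
    finally show ?thesis by simp
  qed
qed

definition block_sizes :: "nat \<Rightarrow> nat set list \<Rightarrow> nat list" where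
  "block_sizes n bs = map card bs @ [n - sum_list (map card bs)]"

lemma distinct_concat_sorted_list_of_set:
  "disjoint_blocks bs \<Longrightarrow> \<forall>B\<in>set bs. finite B \<Longrightarrow> finite Z \<Longrightarrow> Z \<inter> \<Union>(set bs) = {}
    \<Longrightarrow> distinct (concat (map sorted_list_of_set (bs @ [Z])))"
  by (induction bs) auto

lemma set_concat_sorted_list_of_set:
  "\<forall>B\<in>set bs. finite B \<Longrightarrow> set (concat (map sorted_list_of_set bs)) = \<Union>(set bs)"
  by (induction bs) auto

lemma disjoint_blocks_map_set: "distinct (concat ls) \<Longrightarrow> \<forall>l\<in>set ls. l \<noteq> [] \<Longrightarrow> disjoint_blocks (map set ls)"
  by (induction ls) auto

lemma card_Union_disjoint_blocks:
  "disjoint_blocks bs \<Longrightarrow> \<forall>B\<in>set bs. finite B \<Longrightarrow> card (\<Union>(set bs)) = sum_list (map card bs)"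
  by (induction bs) (auto simp: card_Un_disjoint)

lemma block_lists_finite_blocks: "bs \<in> block_lists n \<Longrightarrow> \<forall>B\<in>set bs. finite B"
  unfolding block_lists_def by (auto intro: finite_subset)

lemma block_sizes_props:
  assumes bs: "bs \<in> block_lists n"
  shows "block_sizes n bs \<in> CP n" "psp_type (psp_of_blocks n bs) = comp_type (block_sizes n bs)"
    "length (block_sizes n bs) - 1 = length bs"
proof -
  have o: "disjoint_blocks bs" and u: "\<Union>(set bs) \<subseteq> {1..n}" using bs unfolding block_lists_def by auto
  note fin = block_lists_finite_blocks[OF bs]
  have cU: "card (\<Union>(set bs)) = sum_list (map card bs)" using card_Union_disjoint_blocks[OF o fin] .
  have le: "sum_list (map card bs) \<le> n" using cU card_mono[OF _ u] by simp
  have pos: "\<forall>x\<in>set (map card bs). 0 < x" using disjoint_blocks_nonempty[OF o] fin by (auto simp: card_gt_0_iff)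
  show "block_sizes n bs \<in> CP n" unfolding CP_def block_sizes_def using le pos by (simp add: butlast_append)
  have "image_mset card (mset_set (set bs)) = mset (map card bs)"
    using disjoint_blocks_distinct[OF o] by (simp add: mset_set_set)
  moreover have "card ({1..n} - \<Union>(set bs)) = n - sum_list (map card bs)"
    using u cU by (simp add: card_Diff_subset finite_Union fin)
  ultimately show "psp_type (psp_of_blocks n bs) = comp_type (block_sizes n bs)"
    unfolding psp_type_def psp_of_blocks_def comp_type_def block_sizes_def by (simp add: butlast_append)
  show "length (block_sizes n bs) - 1 = length bs" unfolding block_sizes_def by simp
qed

text \<open>A block list is encoded by the word listing its blocks, and then the zero block, each in
  increasing order; a permutation arises this way from a block list of sizes \<open>x\<close> iff its descents
  lie in the descent set of \<open>x\<close>.\<close>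

definition word_of_blocks :: "nat \<Rightarrow> nat set list \<Rightarrow> nat list" where
  "word_of_blocks n bs = concat (map sorted_list_of_set (bs @ [{1..n} - \<Union>(set bs)]))"

definition blocks_of_word :: "nat list \<Rightarrow> nat list \<Rightarrow> nat set list" where
  "blocks_of_word x L = map set (butlast (split_lengths x L))"

lemma blocks_of_word_props:
  assumes x: "x \<in> CP n" and dL: "distinct L" and sL: "set L = {1..n}"
    and aL: "ascends_off (comp_descent_set x) L"
  shows "blocks_of_word x L \<in> block_lists n" "block_sizes n (blocks_of_word x L) = x"
    "word_of_blocks n (blocks_of_word x L) = L"
proof -
  have xne: "x \<noteq> []" and sx: "sum_list x = n" and px: "pos_butlast x" using x unfolding CP_iff by auto
  have len: "length L = n" using distinct_card[OF dL] sL by simp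
  define ls where "ls = split_lengths x L"
  have cls: "concat ls = L" unfolding ls_def using concat_split_lengths[of x L] sx len by simp
  have mls: "map length ls = x" unfolding ls_def using map_length_split_lengths[of x L] sx len by simp
  have srt: "\<forall>l\<in>set ls. sorted l"
    using ascends_off_split_lengths[OF px xne, of L] aL sx len unfolding ls_def by simp
  have dst: "\<forall>l\<in>set ls. distinct l" using dL cls distinct_concat_iff by blast
  have "ls \<noteq> []" using mls xne by auto
  then have lsd: "ls = butlast ls @ [last ls]" by simp
  have "distinct (concat (butlast ls) @ last ls)" using dL cls lsd by (metis concat_append concat.simps append_Nil2)
  then have d3: "distinct (concat (butlast ls))" "set (concat (butlast ls)) \<inter> set (last ls) = {}" by auto
  have sL2: "set L = set (concat (butlast ls)) \<union> set (last ls)"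
    using cls lsd by (metis set_append concat_append concat.simps append_Nil2)
  have mbl: "map length (butlast ls) = butlast x" using mls by (metis map_butlast)
  have ne: "\<forall>l\<in>set (butlast ls). l \<noteq> []"
    using mbl px unfolding pos_butlast_def by (metis image_eqI length_greater_0_conv list.set_map)
  have U: "\<Union>(set (blocks_of_word x L)) = set (concat (butlast ls))"
    unfolding blocks_of_word_def ls_def[symmetric] by auto
  show "blocks_of_word x L \<in> block_lists n"
    using disjoint_blocks_map_set[OF d3(1) ne] U sL2 sL
    unfolding block_lists_def blocks_of_word_def ls_def[symmetric] by auto
  have "map card (blocks_of_word x L) = map length (butlast ls)" unfolding blocks_of_word_def ls_def[symmetric]
    using dst by (auto intro!: map_cong distinct_card dest: in_set_butlastD)
  moreover have "n - sum_list (butlast x) = last x" using sum_butlast_last[OF xne] sx by simp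
  ultimately show "block_sizes n (blocks_of_word x L) = x"
    unfolding block_sizes_def mbl using xne by simp
  have Z: "{1..n} - \<Union>(set (blocks_of_word x L)) = set (last ls)" using U sL2 sL d3(2) by auto
  have "word_of_blocks n (blocks_of_word x L) = concat (map (sorted_list_of_set \<circ> set) (butlast ls @ [last ls]))"
    unfolding word_of_blocks_def Z unfolding blocks_of_word_def ls_def by simp
  also have "\<dots> = concat ls"
    using srt dst lsd[symmetric]
    by (auto intro!: arg_cong[where f = concat] map_idI sorted_list_of_set.idem_if_sorted_distinct)
  finally show "word_of_blocks n (blocks_of_word x L) = L" using cls by simp
qed

lemma word_of_blocks_props:
  assumes x: "x \<in> CP n" and bs: "bs \<in> block_lists n" and szx: "block_sizes n bs = x"
  shows "distinct (word_of_blocks n bs)" "set (word_of_blocks n bs) = {1..n}"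
    "ascends_off (comp_descent_set x) (word_of_blocks n bs)" "blocks_of_word x (word_of_blocks n bs) = bs"
proof -
  have xne: "x \<noteq> []" and px: "pos_butlast x" using x unfolding CP_iff by auto
  have o: "disjoint_blocks bs" and u: "\<Union>(set bs) \<subseteq> {1..n}" using bs unfolding block_lists_def by auto
  note fin = block_lists_finite_blocks[OF bs]
  define Z where "Z = {1..n} - \<Union>(set bs)"
  define ls where "ls = map sorted_list_of_set (bs @ [Z])"
  have finZ: "\<forall>B\<in>set (bs @ [Z]). finite B" using fin unfolding Z_def by auto
  have cZ: "card Z = n - sum_list (map card bs)"
    unfolding Z_def using card_Union_disjoint_blocks[OF o fin] u by (simp add: card_Diff_subset finite_Union fin)
  have mls: "map length ls = x"
    unfolding ls_def using finZ szx cZ unfolding block_sizes_def by (auto intro!: map_cong)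
  have W: "word_of_blocks n bs = concat ls" unfolding word_of_blocks_def ls_def Z_def by simp
  show "distinct (word_of_blocks n bs)"
    unfolding W ls_def using distinct_concat_sorted_list_of_set[OF o fin] unfolding Z_def by auto
  show "set (word_of_blocks n bs) = {1..n}"
    unfolding W ls_def using set_concat_sorted_list_of_set[OF finZ] u unfolding Z_def by auto
  have split: "split_lengths x (word_of_blocks n bs) = ls"
    unfolding W mls[symmetric] by (rule split_lengths_concat)
  have "sum_list x = length (word_of_blocks n bs)" unfolding W mls[symmetric] by (simp add: length_concat)
  then show "ascends_off (comp_descent_set x) (word_of_blocks n bs)"
    using ascends_off_split_lengths[OF px xne] split unfolding ls_def by simp
  have "blocks_of_word x (word_of_blocks n bs) = map set (map sorted_list_of_set bs)"
    unfolding blocks_of_word_def split ls_def by (simp add: butlast_append)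
  also have "\<dots> = bs" using fin by (induction bs) auto
  finally show "blocks_of_word x (word_of_blocks n bs) = bs" .
qed

lemma card_block_lists_of_sizes:
  assumes "x \<in> CP n"
  shows "card {bs\<in>block_lists n. block_sizes n bs = x}
    = card {t. t permutes {1..n} \<and> descents t n \<subseteq> comp_descent_set x}"
  unfolding card_permutes_descents_subset
  by (rule sym, rule bij_betw_same_card, rule bij_betw_byWitness[where f' = "word_of_blocks n"])
    (use blocks_of_word_props[OF assms] word_of_blocks_props[OF assms] in auto)

lemma bij_betw_comp_descent_set_above:
  assumes z: "z \<in> CP n"
  shows "bij_betw comp_descent_set {x\<in>CP n. comp_le z x} (Pow (comp_descent_set z))"
proof (rule bij_betw_imageI)
  have zne: "z \<noteq> []" and pz: "pos_butlast z" using z unfolding CP_iff by auto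
  show "inj_on comp_descent_set {x\<in>CP n. comp_le z x}"
    using comp_descent_set_inj unfolding CP_iff by (auto intro!: inj_onI)
  show "comp_descent_set ` {x\<in>CP n. comp_le z x} = Pow (comp_descent_set z)"
  proof
    show "comp_descent_set ` {x\<in>CP n. comp_le z x} \<subseteq> Pow (comp_descent_set z)"
      using comp_le_props[OF _ pz zne] by auto
    show "Pow (comp_descent_set z) \<subseteq> comp_descent_set ` {x\<in>CP n. comp_le z x}"
    proof
      fix S assume "S \<in> Pow (comp_descent_set z)"
      then obtain x where x: "comp_le z x" "comp_descent_set x = S" using comp_descent_set_surj[OF pz zne] by blast
      then have "x \<in> CP n" using comp_le_props[OF x(1) pz zne] z unfolding CP_iff by simp
      then show "S \<in> comp_descent_set ` {x\<in>CP n. comp_le z x}" using x by blast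
    qed
  qed
qed

lemma card_subset_image_eq_sum:
  assumes "finite T" "finite S"
  shows "card {t\<in>T. D t \<subseteq> S} = (\<Sum>U\<in>Pow S. card {t\<in>T. D t = U})"
proof -
  have "card {t\<in>T. D t \<subseteq> S} = (\<Sum>U\<in>Pow S. card {t\<in>{t\<in>T. D t \<subseteq> S}. D t = U})"
    using sum.group[of "{t\<in>T. D t \<subseteq> S}" "Pow S" D "\<lambda>_. 1::nat"] assms by (simp add: image_subset_iff)
  also have "\<dots> = (\<Sum>U\<in>Pow S. card {t\<in>T. D t = U})"
    by (rule sum.cong[OF refl], rule arg_cong[where f = card]) auto
  finally show ?thesis .
qed

definition num_block_lists :: "nat \<Rightarrow> nat list \<Rightarrow> nat" where
  "num_block_lists n c = card {bs\<in>block_lists n. block_sizes n bs = c}"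

text \<open>Inclusion-exclusion over the Boolean lattice of descent sets above \<open>z\<close>.\<close>

lemma signed_beta_eq_sum_above:
  assumes z: "z \<in> CP n"
  shows "(-1) ^ (length z - 1) * beta z
     = (\<Sum>x\<in>{x\<in>CP n. comp_le z x}. (-1) ^ (length x - 1) * int (num_block_lists n x))"
proof -
  have pz: "pos_butlast z" using z unfolding CP_iff by auto
  define T where "T = {t. t permutes {1..n::nat}}"
  have finT: "finite T" unfolding T_def by (simp add: finite_permutations)
  define \<alpha> where "\<alpha> S = int (card {t\<in>T. descents t n \<subseteq> S})" for S
  define \<beta> where "\<beta> S = int (card {t\<in>T. descents t n = S})" for S
  have "(\<Sum>x\<in>{x\<in>CP n. comp_le z x}. (-1) ^ (length x - 1) * int (num_block_lists n x))
      = (\<Sum>x\<in>{x\<in>CP n. comp_le z x}. (-1) ^ card (comp_descent_set x) * \<alpha> (comp_descent_set x))"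
    using card_comp_descent_set card_block_lists_of_sizes
    unfolding num_block_lists_def \<alpha>_def T_def CP_iff by (intro sum.cong) auto
  also have "\<dots> = (\<Sum>S\<in>Pow (comp_descent_set z). (-1) ^ card S * \<alpha> S)"
    by (rule sum.reindex_bij_betw[OF bij_betw_comp_descent_set_above[OF z]])
  also have "\<dots> = (-1) ^ card (comp_descent_set z) * \<beta> (comp_descent_set z)"
  proof (rule inclusion_exclusion_symmetric[symmetric, OF _ finite_comp_descent_set])
    fix S :: "nat set" assume "finite S"
    then show "\<alpha> S = (\<Sum>U\<in>Pow S. (-1) ^ card U * ((-1) ^ card U * \<beta> U))"
      unfolding \<alpha>_def \<beta>_def card_subset_image_eq_sum[OF finT \<open>finite S\<close>]
      by (simp flip: power_add mult.assoc)
  qed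
  also have "\<dots> = (-1) ^ (length z - 1) * beta z"
    unfolding beta_eq_card_descents[OF z] card_comp_descent_set[OF pz] \<beta>_def T_def by simp
  finally show ?thesis by simp
qed

lemma sum_signs_block_lists_by_sizes:
  assumes "C \<subseteq> CP n"
  shows "(\<Sum>bs\<in>{bs\<in>block_lists n. block_sizes n bs \<in> C}. (-1::int) ^ length bs)
    = (\<Sum>c\<in>C. (-1) ^ (length c - 1) * int (num_block_lists n c))"
proof -
  have "(\<Sum>bs\<in>{bs\<in>block_lists n. block_sizes n bs \<in> C}. (-1::int) ^ length bs)
      = (\<Sum>c\<in>C. \<Sum>bs\<in>{bs\<in>block_lists n. block_sizes n bs = c}. (-1) ^ length bs)"
    using finite_subset[OF assms finite_CP] finite_block_lists
    by (subst sum.group[symmetric, where g = "block_sizes n"]) (auto intro!: sum.cong)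
  also have "\<dots> = (\<Sum>c\<in>C. \<Sum>bs\<in>{bs\<in>block_lists n. block_sizes n bs = c}. (-1) ^ (length c - 1))"
    by (intro sum.cong refl) (auto simp flip: block_sizes_props(3))
  also have "\<dots> = (\<Sum>c\<in>C. (-1) ^ (length c - 1) * int (num_block_lists n c))"
    unfolding num_block_lists_def by (simp add: mult.commute)
  finally show ?thesis .
qed

lemma mobius_PiP_filter_top:
  assumes F: "is_filter_IP n F" "F \<noteq> {}"
  shows "mobius (with_bot {p \<in> PiP n. psp_type p \<in> F}) (lift_bot psp_le) None (Some (PiP_top n))
    = - (\<Sum>c\<in>{c \<in> CP n. comp_type c \<in> F}. (-1) ^ (length c - 1) * int (num_block_lists n c))"
proof -
  let ?PF = "{p \<in> PiP n. psp_type p \<in> F}"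
  have top: "PiP_top n \<in> ?PF"
    using is_filter_IP_top[OF F] PiP_top_in_PiP psp_type_PiP_top by simp
  have up: "y \<in> ?PF" if "x \<in> ?PF" "y \<in> PiP n" "psp_le x y" for x y
  proof -
    have "psp_type y \<in> IP n" "ip_le (psp_type x) (psp_type y)"
      using that psp_type_IP psp_type_mono by (cases x, cases y, auto)+
    then show ?thesis using F(1) that unfolding is_filter_IP_def by blast
  qed
  have "mobius (with_bot ?PF) (lift_bot psp_le) None (Some (PiP_top n)) = - (\<Sum>x\<in>?PF. signed_orderings n x)"
    by (rule mobius_bot_top_eq_neg_sum[OF finite_PiP _ porder_on_subset[OF porder_PiP] top up])
      (auto simp: sum_signed_orderings_above)
  also have "(\<Sum>x\<in>?PF. signed_orderings n x)
      = (\<Sum>bs\<in>{bs\<in>block_lists n. block_sizes n bs \<in> {c \<in> CP n. comp_type c \<in> F}}. (-1) ^ length bs)"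
    unfolding sum_signed_orderings[of ?PF n, simplified]
    using psp_of_blocks_PiP block_sizes_props(1,2) by (intro sum.cong) auto
  also have "\<dots> = (\<Sum>c\<in>{c \<in> CP n. comp_type c \<in> F}. (-1) ^ (length c - 1) * int (num_block_lists n c))"
    by (rule sum_signs_block_lists_by_sizes) auto
  finally show ?thesis .
qed

lemma sum_mobius_CP_filter:
  assumes F: "is_filter_IP n F"
  shows "(\<Sum>c\<in>{c \<in> CP n. comp_type c \<in> F}.
            (-1) ^ (length c - 1) * mobius (with_bot {c \<in> CP n. comp_type c \<in> F}) (lift_bot comp_le) None (Some c)
            * beta c)
    = - (\<Sum>c\<in>{c \<in> CP n. comp_type c \<in> F}. (-1) ^ (length c - 1) * int (num_block_lists n c))"
proof -
  let ?CF = "{c \<in> CP n. comp_type c \<in> F}"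
  have up: "y \<in> ?CF" if "x \<in> ?CF" "y \<in> CP n" "comp_le x y" for x y
    using F that comp_type_IP comp_type_mono unfolding is_filter_IP_def by blast
  have "(\<Sum>c\<in>?CF. mobius (with_bot ?CF) (lift_bot comp_le) None (Some c) * ((-1) ^ (length c - 1) * beta c))
      = - (\<Sum>c\<in>?CF. (-1) ^ (length c - 1) * int (num_block_lists n c))"
    by (rule sum_mobius_bot_times_upper_sum[OF finite_CP _ porder_on_subset[OF porder_CP] up])
      (use signed_beta_eq_sum_above in auto)
  then show ?thesis by (simp add: ac_simps)
qed

theorem theorem3p1:
  fixes n :: nat and F :: "pip set"
  assumes "is_filter_IP n F" and "F \<noteq> {}"
  shows "mobius (with_bot {p \<in> PiP n. psp_type p \<in> F}) (lift_bot psp_le) None (Some (PiP_top n))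
       = (\<Sum>c\<in>{c \<in> CP n. comp_type c \<in> F}.
            (-1) ^ (length c - 1)
            * mobius (with_bot {c \<in> CP n. comp_type c \<in> F}) (lift_bot comp_le) None (Some c)
            * beta c)"
  using mobius_PiP_filter_top[OF assms] sum_mobius_CP_filter[OF assms(1)] by simp

end
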